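(* Let $f,g\in\mathrm{SL}_3(\mathbb{R})$ satisfy: (1) $f$ has one-dimensional eigenspaces $E^u,E^c,E^s$ with eigenvalues of moduli $\lambda_u>\lambda_c>\lambda_s$; (2) there exist a positive integer $m$ and $\mu>1$ such that $P_0:=\ker(g^m-\mu\,\mathrm{id})$ is two-dimensional and $L_0:=\ker(g^m-\mu^{-2}\mathrm{id})$ is one-dimensional; (3) $E^u,E^c,E^s\not\subset P_0$, $L_0\not\subset E^{cu}:=E^u\oplus E^c$ and $L_0\not\subset E^{cs}:=E^s\oplus E^c$; (4) for all $0\le k<m$, $g^k((E^u\oplus L_0)\cap P_0)\not\subset E^{cs}\cup E^{cu}$ and $g^k((E^s\oplus L_0)\cap P_0)\not\subset E^{cs}\cup E^{cu}$. Then there exists $n_0$ such that $F_n:=\{f^n,f^{-n},g^n,g^{-n}\}$ satisfies condition $(\ast)$ for all $n>n_0$.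
   Context: For $g\in\mathrm{SL}_3(\mathbb{R})$ and a line $L\in\mathbb{RP}^2$, $\|g|_L\|:=\|gv\|/\|v\|$ for non-zero $v\in L$. A finite symmetric set $F\subset\mathrm{SL}_3(\mathbb{R})$ satisfies condition $(\ast)$ if there exist $c>1$, a line $L_0'\in\mathbb{RP}^2$, and for each $h\in F$ a subset $C_h\subset\mathbb{RP}^2$ such that: (i) $C_h\cap C_{h'}=\emptyset$ if $h\ne h'$; (ii) $L_0'\notin\bigcup_{h\in F}C_h$; (iii) $h\cdot L_0'\in C_h$ for all $h\in F$; (iv) $h\cdot C_{h'}\subset C_h$ whenever $h\neq h'^{-1}$; (v) $\|h|_L\|\ge c$ for all $L\in\bigcup_{h'\ne h^{-1}}C_{h'}$. *)

theory Defs
  imports "HOL-Analysis.Analysis"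
begin

type_synonym mat3 = "real^3^3"
type_synonym vec3 = "real^3"

primrec mpow :: "mat3 \<Rightarrow> nat \<Rightarrow> mat3" where
  "mpow A 0 = mat 1"
| "mpow A (Suc n) = A ** mpow A n"

definition SL3 :: "mat3 set" where
  "SL3 = {A. det A = 1}"

definition RP2 :: "vec3 set set" where
  "RP2 = {L. subspace L \<and> dim L = 1}"

definition act :: "mat3 \<Rightarrow> vec3 set \<Rightarrow> vec3 set" where
  "act g L = (\<lambda>v. g *v v) ` L"

definition restr_norm :: "mat3 \<Rightarrow> vec3 set \<Rightarrow> real" where
  "restr_norm g L = (let v = (SOME v. v \<in> L \<and> v \<noteq> 0) in norm (g *v v) / norm v)"

definition dsum :: "vec3 set \<Rightarrow> vec3 set \<Rightarrow> vec3 set" where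
  "dsum U V = {u + v | u v. u \<in> U \<and> v \<in> V}"

definition eigsp :: "mat3 \<Rightarrow> real \<Rightarrow> vec3 set" where
  "eigsp A a = {v. A *v v = a *\<^sub>R v}"

definition cond_star :: "mat3 set \<Rightarrow> bool" where
  "cond_star F \<longleftrightarrow>
    (\<exists>c > 1. \<exists>L0' \<in> RP2. \<exists>C :: mat3 \<Rightarrow> vec3 set set.
       (\<forall>h\<in>F. C h \<subseteq> RP2) \<and>
       (\<forall>h\<in>F. \<forall>h'\<in>F. h \<noteq> h' \<longrightarrow> C h \<inter> C h' = {}) \<and>
       L0' \<notin> (\<Union>h\<in>F. C h) \<and>
       (\<forall>h\<in>F. act h L0' \<in> C h) \<and>
       (\<forall>h\<in>F. \<forall>h'\<in>F. h \<noteq> matrix_inv h' \<longrightarrow> act h ` C h' \<subseteq> C h) \<and>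
       (\<forall>h\<in>F. \<forall>L \<in> (\<Union>h'\<in>{h'\<in>F. h' \<noteq> matrix_inv h}. C h'). restr_norm h L \<ge> c))"

end

theory Submission
  imports Defs
begin

text \<open>For large \<open>n\<close> the four maps \<open>f\<^sup>n, f\<^sup>-\<^sup>n, g\<^sup>n, g\<^sup>-\<^sup>n\<close> play ping-pong on four cones. In the
  eigen-coordinates \<open>xu, xc, xs\<close> of \<open>f\<close>, \<open>f\<^sup>n\<close> pushes every vector with a non-negligible
  \<open>E\<^sup>u\<close>-component into a thin cone around \<open>E\<^sup>u\<close>, expanding it, and \<open>f\<^sup>-\<^sup>n\<close> does the same for \<open>E\<^sup>s\<close>.
  Splitting \<open>\<real>\<^sup>3 = P\<^sub>0 \<oplus> L\<^sub>0\<close> for \<open>g\<^sup>m\<close>, the map \<open>g\<^sup>n\<close> expands \<open>P\<^sub>0\<close> at rate \<open>\<nu>\<^sup>n\<close>, \<open>\<nu> = \<mu>\<^bsup>1/m\<^esup>\<close>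
  (measured by an adapted norm), and contracts \<open>L\<^sub>0\<close> at rate \<open>\<nu>\<^bsup>-2n\<^esup>\<close>, so \<open>g\<^sup>n\<close> pushes vectors
  towards \<open>P\<^sub>0\<close> and \<open>g\<^sup>-\<^sup>n\<close> towards \<open>L\<^sub>0\<close>. The transversality conditions (3) and (4) ensure that each
  cone lies where the other pair of maps expands: the cone around \<open>P\<^sub>0\<close> is restricted to vectors
  near the \<open>g\<close>-orbits of the lines \<open>(E\<^sup>u \<oplus> L\<^sub>0) \<inter> P\<^sub>0\<close> and \<open>(E\<^sup>s \<oplus> L\<^sub>0) \<inter> P\<^sub>0\<close>, on which \<open>xu\<close> and
  \<open>xs\<close> are bounded below by (4) because these orbits are periodic up to scaling. The lines in the
  four cones are the sets \<open>C\<^sub>h\<close> of condition \<open>(\<ast>)\<close>, with expansion factor \<open>c = 2\<close>.\<close>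

section \<open>Lines, cones and the ping-pong criterion\<close>

definition scale_invariant :: "(vec3 \<Rightarrow> bool) \<Rightarrow> bool" where
  "scale_invariant Q \<longleftrightarrow> (\<forall>v r. Q v \<longrightarrow> r \<noteq> 0 \<longrightarrow> Q (r *\<^sub>R v))"

definition cone_lines :: "(vec3 \<Rightarrow> bool) \<Rightarrow> vec3 set set" where
  "cone_lines Q = {L. \<exists>v. v \<noteq> 0 \<and> L = span {v} \<and> Q v}"

lemma RP2_iff_span_singleton: "L \<in> RP2 \<longleftrightarrow> (\<exists>v. v \<noteq> 0 \<and> L = span {v})"
proof
  assume "L \<in> RP2"
  then have L: "subspace L" "dim L = 1" by (auto simp: RP2_def)
  obtain B where B: "B \<subseteq> L" "independent B" "L \<subseteq> span B" "card B = dim L"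
    using basis_exists by blast
  then obtain v where "B = {v}" using L(2) by (metis card_1_singletonE)
  moreover have "span B \<subseteq> L" using B(1) L(1) by (simp add: span_minimal)
  ultimately show "\<exists>v. v \<noteq> 0 \<and> L = span {v}"
    using B by (metis dependent_zero insertI1 subset_antisym)
next
  assume "\<exists>v. v \<noteq> 0 \<and> L = span {v}"
  then show "L \<in> RP2" by (auto simp: RP2_def dim_span)
qed

lemma cone_lines_subset_RP2: "cone_lines Q \<subseteq> RP2"
  by (auto simp: cone_lines_def RP2_iff_span_singleton)

lemma mem_cone_lines_imp:
  assumes "scale_invariant Q" "L \<in> cone_lines Q" "u \<in> L" "u \<noteq> 0"
  shows "Q u"
proof -
  obtain v where v: "L = span {v}" "Q v" using assms(2) by (auto simp: cone_lines_def)
  then obtain r where "r \<noteq> 0" "u = r *\<^sub>R v" using assms(3,4) by (auto simp: span_singleton)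
  then show ?thesis using assms(1) v(2) by (simp add: scale_invariant_def)
qed

lemma span_notin_cone_lines:
  assumes "scale_invariant Q" "\<not> Q w" "w \<noteq> 0"
  shows "span {w} \<notin> cone_lines Q"
  using mem_cone_lines_imp[OF assms(1), of "span {w}" w] assms(2,3) by (auto simp: span_base)

lemma act_span_singleton: "act h (span {v}) = span {h *v v}"
  by (simp add: act_def span_linear_image[symmetric])

lemma act_span_mem_cone_lines:
  assumes "Q (h *v w)" "h *v w \<noteq> 0"
  shows "act h (span {w}) \<in> cone_lines Q"
  using assms by (auto simp: act_span_singleton cone_lines_def)

lemma cone_lines_disjoint:
  assumes "scale_invariant P" "scale_invariant Q" "\<And>v. P v \<Longrightarrow> Q v \<Longrightarrow> v = 0"
  shows "cone_lines P \<inter> cone_lines Q = {}"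
proof (rule ccontr)
  assume "cone_lines P \<inter> cone_lines Q \<noteq> {}"
  then obtain L where L: "L \<in> cone_lines P" "L \<in> cone_lines Q" by blast
  then obtain v where v: "v \<noteq> 0" "L = span {v}" by (auto simp: cone_lines_def)
  then have "v \<in> L" by (simp add: span_base)
  then show False using mem_cone_lines_imp[OF assms(1) L(1)] mem_cone_lines_imp[OF assms(2) L(2)]
    assms(3) v(1) by blast
qed

lemma act_cone_lines_subset:
  assumes "c > 0" "\<And>v. v \<noteq> 0 \<Longrightarrow> R v \<Longrightarrow> P (h *v v) \<and> c * norm v \<le> norm (h *v v)"
  shows "act h ` cone_lines R \<subseteq> cone_lines P"
proof
  fix L' assume "L' \<in> act h ` cone_lines R"
  then obtain v where v: "v \<noteq> 0" "R v" "L' = act h (span {v})" by (auto simp: cone_lines_def)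
  moreover have "0 < c * norm v" using assms(1) v(1) by simp
  ultimately have "P (h *v v)" "0 < norm (h *v v)"
    using assms(2)[OF v(1,2)] by (auto intro: order_less_le_trans)
  then show "L' \<in> cone_lines P" using v(3) by (auto simp: act_span_mem_cone_lines)
qed

lemma restr_norm_ge_on_cone_lines:
  assumes "scale_invariant R" "L \<in> cone_lines R"
    and "\<And>v. v \<noteq> 0 \<Longrightarrow> R v \<Longrightarrow> c * norm v \<le> norm (h *v v)"
  shows "c \<le> restr_norm h L"
proof -
  obtain v where "v \<noteq> 0" "L = span {v}" using assms(2) by (auto simp: cone_lines_def)
  then have ex: "\<exists>u. u \<in> L \<and> u \<noteq> 0" by (auto intro: span_base)
  define u where "u = (SOME u. u \<in> L \<and> u \<noteq> 0)"
  have u: "u \<in> L" "u \<noteq> 0" using someI_ex[OF ex] by (auto simp: u_def)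
  then have "c * norm u \<le> norm (h *v u)"
    using assms(3) mem_cone_lines_imp[OF assms(1,2)] by blast
  then show ?thesis using u by (simp add: restr_norm_def u_def[symmetric] Let_def field_simps)
qed

lemma matrix_inv_invertible:
  fixes A :: mat3
  assumes "invertible A"
  shows "A ** matrix_inv A = mat 1" "matrix_inv A ** A = mat 1"
  using someI_ex[OF assms[unfolded invertible_def]] by (simp_all add: matrix_inv_def)

lemma matrix_inv_unique:
  fixes A B :: mat3
  assumes "A ** B = mat 1" "B ** A = mat 1"
  shows "matrix_inv A = B"
proof -
  have "invertible A" using assms by (auto simp: invertible_def)
  then have "matrix_inv A = matrix_inv A ** (A ** B)" using assms by (simp add: matrix_mul_rid)
  also have "\<dots> = B"
    using matrix_inv_invertible[OF \<open>invertible A\<close>] by (simp add: matrix_mul_assoc matrix_mul_lid)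
  finally show ?thesis .
qed

lemma matrix_inv_matrix_inv:
  fixes A :: mat3
  assumes "invertible A"
  shows "matrix_inv (matrix_inv A) = A"
  using matrix_inv_unique matrix_inv_invertible[OF assms] by blast

lemma invertible_mult_vec_eq_0:
  fixes A :: mat3
  assumes "invertible A" "A *v v = 0"
  shows "v = 0"
  using assms matrix_left_invertible_ker invertible_def by blast

lemma cond_star_pingpong:
  fixes a b :: mat3 and Qa Qai Qb Qbi :: "vec3 \<Rightarrow> bool" and w :: vec3 and c :: real
  defines "ai \<equiv> matrix_inv a" and "bi \<equiv> matrix_inv b"
  assumes inv: "invertible a" "invertible b"
    and scale_inv: "scale_invariant Qa" "scale_invariant Qai" "scale_invariant Qb" "scale_invariant Qbi"
    and disj: "\<And>v. Qa v \<Longrightarrow> Qai v \<Longrightarrow> v = 0" "\<And>v. Qa v \<Longrightarrow> Qb v \<Longrightarrow> v = 0"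
      "\<And>v. Qa v \<Longrightarrow> Qbi v \<Longrightarrow> v = 0" "\<And>v. Qai v \<Longrightarrow> Qb v \<Longrightarrow> v = 0"
      "\<And>v. Qai v \<Longrightarrow> Qbi v \<Longrightarrow> v = 0" "\<And>v. Qb v \<Longrightarrow> Qbi v \<Longrightarrow> v = 0"
    and w: "w \<noteq> 0" "\<not> Qa w" "\<not> Qai w" "\<not> Qb w" "\<not> Qbi w"
    and w_image: "Qa (a *v w)" "Qai (ai *v w)" "Qb (b *v w)" "Qbi (bi *v w)"
    and exp_a: "\<And>v. v \<noteq> 0 \<Longrightarrow> Qa v \<or> Qb v \<or> Qbi v \<Longrightarrow> Qa (a *v v) \<and> c * norm v \<le> norm (a *v v)"
    and exp_ai: "\<And>v. v \<noteq> 0 \<Longrightarrow> Qai v \<or> Qb v \<or> Qbi v \<Longrightarrow> Qai (ai *v v) \<and> c * norm v \<le> norm (ai *v v)"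
    and exp_b: "\<And>v. v \<noteq> 0 \<Longrightarrow> Qb v \<or> Qa v \<or> Qai v \<Longrightarrow> Qb (b *v v) \<and> c * norm v \<le> norm (b *v v)"
    and exp_bi: "\<And>v. v \<noteq> 0 \<Longrightarrow> Qbi v \<or> Qa v \<or> Qai v \<Longrightarrow> Qbi (bi *v v) \<and> c * norm v \<le> norm (bi *v v)"
    and c: "c > 1"
  shows "cond_star {a, ai, b, bi}"
proof -
  have inv': "invertible ai" "invertible bi"
    using matrix_inv_invertible inv unfolding ai_def bi_def invertible_def by blast+
  have w_image_nz: "a *v w \<noteq> 0" "ai *v w \<noteq> 0" "b *v w \<noteq> 0" "bi *v w \<noteq> 0"
    using invertible_mult_vec_eq_0 inv inv' w(1) by blast+
  have "a \<noteq> ai" "a \<noteq> b" "a \<noteq> bi" "ai \<noteq> b" "ai \<noteq> bi" "b \<noteq> bi"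
    using disj w_image w_image_nz by metis+
  note distinct = this this[symmetric]
  have inv_inv: "matrix_inv ai = a" "matrix_inv bi = b"
    using matrix_inv_matrix_inv inv unfolding ai_def bi_def by blast+
  define C where "C h = cone_lines (if h = a then Qa else if h = ai then Qai else if h = b then Qb else Qbi)"
    for h
  have C: "C a = cone_lines Qa" "C ai = cone_lines Qai" "C b = cone_lines Qb" "C bi = cone_lines Qbi"
    using distinct by (auto simp: C_def)
  have C_disj: "cone_lines Qa \<inter> cone_lines Qai = {}" "cone_lines Qa \<inter> cone_lines Qb = {}"
      "cone_lines Qa \<inter> cone_lines Qbi = {}" "cone_lines Qai \<inter> cone_lines Qb = {}"
      "cone_lines Qai \<inter> cone_lines Qbi = {}" "cone_lines Qb \<inter> cone_lines Qbi = {}"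
    using cone_lines_disjoint scale_inv disj by blast+
  have c0: "c > 0" using c by simp
  have C_maps: "act a ` cone_lines Qa \<subseteq> cone_lines Qa" "act a ` cone_lines Qb \<subseteq> cone_lines Qa"
    "act a ` cone_lines Qbi \<subseteq> cone_lines Qa"
    "act ai ` cone_lines Qai \<subseteq> cone_lines Qai" "act ai ` cone_lines Qb \<subseteq> cone_lines Qai"
    "act ai ` cone_lines Qbi \<subseteq> cone_lines Qai"
    "act b ` cone_lines Qb \<subseteq> cone_lines Qb" "act b ` cone_lines Qa \<subseteq> cone_lines Qb"
    "act b ` cone_lines Qai \<subseteq> cone_lines Qb"
    "act bi ` cone_lines Qbi \<subseteq> cone_lines Qbi" "act bi ` cone_lines Qa \<subseteq> cone_lines Qbi"
    "act bi ` cone_lines Qai \<subseteq> cone_lines Qbi"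
    by (rule act_cone_lines_subset[OF c0]; simp add: exp_a exp_ai exp_b exp_bi)+
  have norm_a: "c \<le> restr_norm a L" if "L \<in> cone_lines Qa \<union> cone_lines Qb \<union> cone_lines Qbi" for L
    using that scale_inv by (auto intro: restr_norm_ge_on_cone_lines simp: exp_a)
  have norm_ai: "c \<le> restr_norm ai L" if "L \<in> cone_lines Qai \<union> cone_lines Qb \<union> cone_lines Qbi" for L
    using that scale_inv by (auto intro: restr_norm_ge_on_cone_lines simp: exp_ai)
  have norm_b: "c \<le> restr_norm b L" if "L \<in> cone_lines Qb \<union> cone_lines Qa \<union> cone_lines Qai" for L
    using that scale_inv by (auto intro: restr_norm_ge_on_cone_lines simp: exp_b)
  have norm_bi: "c \<le> restr_norm bi L" if "L \<in> cone_lines Qbi \<union> cone_lines Qa \<union> cone_lines Qai" for L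
    using that scale_inv by (auto intro: restr_norm_ge_on_cone_lines simp: exp_bi)
  show ?thesis
    unfolding cond_star_def
  proof (intro exI[of _ c] conjI c bexI[of _ "span {w}"] exI[of _ C] ballI impI)
    show "span {w} \<in> RP2" using w(1) RP2_iff_span_singleton by blast
    show "C h \<subseteq> RP2" for h by (simp add: C_def cone_lines_subset_RP2)
    show "C h \<inter> C h' = {}" if "h \<in> {a, ai, b, bi}" "h' \<in> {a, ai, b, bi}" "h \<noteq> h'" for h h'
      using that by (elim insertE emptyE; simp add: C C_disj Int_commute)
    show "span {w} \<notin> (\<Union>h\<in>{a, ai, b, bi}. C h)"
      using span_notin_cone_lines scale_inv w by (auto simp: C)
    show "act h (span {w}) \<in> C h" if "h \<in> {a, ai, b, bi}" for h
      using that act_span_mem_cone_lines w_image w_image_nz by (auto simp: C)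
    show "act h ` C h' \<subseteq> C h" if "h \<in> {a, ai, b, bi}" "h' \<in> {a, ai, b, bi}" "h \<noteq> matrix_inv h'"
      for h h'
      using that by (elim insertE emptyE; simp add: C C_maps distinct inv_inv flip: ai_def bi_def)
    show "c \<le> restr_norm h L"
      if "h \<in> {a, ai, b, bi}" "L \<in> (\<Union>h'\<in>{h' \<in> {a, ai, b, bi}. h' \<noteq> matrix_inv h}. C h')" for h L
      using that by (elim insertE emptyE; auto simp: C distinct inv_inv intro: norm_a norm_ai norm_b norm_bi simp flip: ai_def bi_def)
  qed
qed

section \<open>Matrix powers and eigenbases\<close>

lemma mpow_Suc_mult_vec: "mpow A (Suc n) *v v = A *v (mpow A n *v v)"
  by (simp add: matrix_vector_mul_assoc)

lemma mpow_add: "mpow A (n + k) = mpow A n ** mpow A k"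
  by (induction n) (simp_all add: matrix_mul_lid matrix_mul_assoc)

lemma mpow_commute: "A ** mpow A n = mpow A n ** A"
  using mpow_add[of A n 1] mpow_add[of A 1 n] by (simp add: matrix_mul_rid)

lemma mpow_Suc_right: "mpow A (Suc n) = mpow A n ** A"
  using mpow_commute by simp

lemma det_mpow: "det (mpow A n) = det A ^ n"
  by (induction n) (simp_all add: det_mul det_I)

lemma invertible_mpow_SL3: "A \<in> SL3 \<Longrightarrow> invertible (mpow A n)"
  by (simp add: invertible_det_nz det_mpow SL3_def)

lemma linear_bounded_pos:
  fixes x :: "'a::euclidean_space \<Rightarrow> 'b::real_normed_vector"
  assumes "linear x"
  shows "\<exists>K>0. \<forall>v. norm (x v) \<le> K * norm v"
  using bounded_linear.pos_bounded[OF assms[unfolded linear_conv_bounded_linear]]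
  by (auto simp: mult.commute)

lemma subspace_eigsp: "subspace (eigsp A a)"
  unfolding subspace_def eigsp_def
  by (simp add: matrix_vector_right_distrib matrix_vector_mult_scaleR scaleR_right_distrib)

lemma eigsp_dim_1:
  assumes "dim (eigsp A a) = 1"
  shows "\<exists>v. v \<noteq> 0 \<and> A *v v = a *\<^sub>R v \<and> eigsp A a = span {v}"
proof -
  have "eigsp A a \<in> RP2" using assms subspace_eigsp by (simp add: RP2_def)
  then obtain v where v: "v \<noteq> 0" "eigsp A a = span {v}" using RP2_iff_span_singleton by blast
  then have "v \<in> eigsp A a" by (simp add: span_base)
  then show ?thesis using v by (auto simp: eigsp_def)
qed

lemma eigsp_dim_2:
  assumes "dim (eigsp A a) = 2"
  obtains p1 p2 where "A *v p1 = a *\<^sub>R p1" "A *v p2 = a *\<^sub>R p2"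
    "\<And>p. A *v p = a *\<^sub>R p \<Longrightarrow> \<exists>x y. p = x *\<^sub>R p1 + y *\<^sub>R p2"
    "\<And>x y. x *\<^sub>R p1 + y *\<^sub>R p2 = 0 \<Longrightarrow> x = 0 \<and> y = 0"
proof -
  obtain B where B: "B \<subseteq> eigsp A a" "independent B" "eigsp A a \<subseteq> span B" "card B = 2"
    using basis_exists[of "eigsp A a"] assms by metis
  then obtain p1 p2 where p12: "B = {p1, p2}" "p1 \<noteq> p2" by (meson card_2_iff)
  have "\<exists>x y. p = x *\<^sub>R p1 + y *\<^sub>R p2" if "A *v p = a *\<^sub>R p" for p
  proof -
    have "p \<in> span {p1, p2}" using B(3) p12 that by (auto simp: eigsp_def)
    then obtain x where "p - x *\<^sub>R p1 \<in> span {p2}" using span_breakdown_eq by blast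
    then obtain y where "p - x *\<^sub>R p1 = y *\<^sub>R p2" by (auto simp: span_singleton)
    then show ?thesis by (metis add.commute diff_eq_eq)
  qed
  moreover have "x = 0 \<and> y = 0" if "x *\<^sub>R p1 + y *\<^sub>R p2 = 0" for x y
  proof (rule ccontr)
    assume nz: "\<not> (x = 0 \<and> y = 0)"
    define u where "u q = (if q = p1 then x else y)" for q
    have "(\<Sum>v\<in>B. u v *\<^sub>R v) = x *\<^sub>R p1 + y *\<^sub>R p2" using p12 by (simp add: u_def)
    then have "dependent B" using dependent_finite[of B] p12 nz that
      by (metis (no_types, lifting) finite.emptyI finite.insertI insertCI u_def)
    then show False using B(2) by simp
  qed
  ultimately show ?thesis using that B(1) p12 by (auto simp: eigsp_def)
qed

definition independent3 :: "vec3 \<Rightarrow> vec3 \<Rightarrow> vec3 \<Rightarrow> bool" where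
  "independent3 e1 e2 e3 \<longleftrightarrow>
     (\<forall>a b c. a *\<^sub>R e1 + b *\<^sub>R e2 + c *\<^sub>R e3 = 0 \<longrightarrow> a = 0 \<and> b = 0 \<and> c = 0)"

definition basis_matrix :: "vec3 \<Rightarrow> vec3 \<Rightarrow> vec3 \<Rightarrow> mat3" where
  "basis_matrix e1 e2 e3 = (\<chi> i j. if j = 1 then e1$i else if j = 2 then e2$i else e3$i)"

lemma basis_matrix_mult_vec:
  "basis_matrix e1 e2 e3 *v y = y$1 *\<^sub>R e1 + y$2 *\<^sub>R e2 + y$3 *\<^sub>R e3"
  by (simp add: vec_eq_iff matrix_vector_mult_def basis_matrix_def sum_3 mult.commute)

lemma invertible_basis_matrix:
  assumes "independent3 e1 e2 e3"
  shows "invertible (basis_matrix e1 e2 e3)"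
proof -
  have "y = 0" if "basis_matrix e1 e2 e3 *v y = 0" for y
  proof -
    have "y$1 = 0 \<and> y$2 = 0 \<and> y$3 = 0"
      using assms that unfolding independent3_def basis_matrix_mult_vec by blast
    then show "y = 0" by (simp add: vec_eq_iff forall_3)
  qed
  then show ?thesis using matrix_left_invertible_ker invertible_left_inverse by blast
qed

lemma coordinates3_exist:
  assumes "independent3 e1 e2 e3"
  shows "\<exists>x1 x2 x3. linear x1 \<and> linear x2 \<and> linear x3 \<and>
     (\<forall>a b c. x1 (a *\<^sub>R e1 + b *\<^sub>R e2 + c *\<^sub>R e3) = a \<and> x2 (a *\<^sub>R e1 + b *\<^sub>R e2 + c *\<^sub>R e3) = b
        \<and> x3 (a *\<^sub>R e1 + b *\<^sub>R e2 + c *\<^sub>R e3) = c) \<and>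
     (\<forall>v. v = x1 v *\<^sub>R e1 + x2 v *\<^sub>R e2 + x3 v *\<^sub>R e3)"
proof -
  define B where "B = basis_matrix e1 e2 e3"
  define Bi where "Bi = matrix_inv B"
  note Bi = matrix_inv_invertible[OF invertible_basis_matrix[OF assms], folded B_def Bi_def]
  define x where "x k v = (Bi *v v)$k" for k v
  have "linear (x k)" for k
    by (rule linearI) (simp_all add: x_def matrix_vector_right_distrib matrix_vector_mult_scaleR)
  moreover have "x 1 w = a \<and> x 2 w = b \<and> x 3 w = c" if "w = a *\<^sub>R e1 + b *\<^sub>R e2 + c *\<^sub>R e3" for a b c w
  proof -
    have "w = B *v (\<chi> i. if i = 1 then a else if i = 2 then b else c)"
      using that by (simp add: B_def basis_matrix_mult_vec)
    then show ?thesis by (simp add: x_def matrix_vector_mul_assoc Bi(2))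
  qed
  moreover have "v = x 1 v *\<^sub>R e1 + x 2 v *\<^sub>R e2 + x 3 v *\<^sub>R e3" for v
  proof -
    have "v = B *v (Bi *v v)" by (simp add: matrix_vector_mul_assoc Bi(1))
    then show ?thesis by (simp add: B_def basis_matrix_mult_vec x_def)
  qed
  ultimately show ?thesis by blast
qed

lemma det_eq_prod_eigenvalues:
  fixes f :: mat3
  assumes "independent3 e1 e2 e3"
    and "f *v e1 = l1 *\<^sub>R e1" "f *v e2 = l2 *\<^sub>R e2" "f *v e3 = l3 *\<^sub>R e3"
  shows "det f = l1 * l2 * l3"
proof -
  define B where "B = basis_matrix e1 e2 e3"
  define l where "l i = (if i = 1 then l1 else if i = 2 then l2 else l3)" for i :: 3
  define D :: mat3 where "D = (\<chi> i j. if i = j then l i else 0)"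
  have D_mult: "D *v y = (\<chi> i. l i * y$i)" for y
    by (simp add: vec_eq_iff matrix_vector_mult_def D_def sum_3 forall_3)
  have "(f ** B) *v y = (B ** D) *v y" for y
  proof -
    have "(f ** B) *v y = y$1 *\<^sub>R (l1 *\<^sub>R e1) + y$2 *\<^sub>R (l2 *\<^sub>R e2) + y$3 *\<^sub>R (l3 *\<^sub>R e3)"
      by (simp only: B_def matrix_vector_mul_assoc[symmetric] basis_matrix_mult_vec
          matrix_vector_right_distrib matrix_vector_mult_scaleR assms(2-4))
    also have "\<dots> = B *v (D *v y)"
      by (simp add: B_def basis_matrix_mult_vec D_mult l_def mult.commute)
    finally show ?thesis by (simp add: matrix_vector_mul_assoc)
  qed
  then have "f ** B = B ** D" using matrix_eq by blast
  then have "det f * det B = det B * det D" by (metis det_mul)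
  moreover have "det D = (\<Prod>i\<in>UNIV. D$i$i)" by (rule det_diagonal) (simp add: D_def)
  moreover have "(\<Prod>i\<in>UNIV. D$i$i) = l1 * l2 * l3" unfolding UNIV_3 by (simp add: D_def l_def)
  moreover have "det B \<noteq> 0"
    using invertible_basis_matrix[OF assms(1)] by (simp add: B_def invertible_det_nz)
  ultimately show ?thesis by simp
qed

text \<open>Applying \<open>(f - y) (f - z)\<close> to a vanishing combination kills all but one coefficient.\<close>

lemma independent3_eigenvectors:
  fixes f :: mat3
  assumes "f *v e1 = l1 *\<^sub>R e1" "f *v e2 = l2 *\<^sub>R e2" "f *v e3 = l3 *\<^sub>R e3"
    and "e1 \<noteq> 0" "e2 \<noteq> 0" "e3 \<noteq> 0" and "l1 \<noteq> l2" "l1 \<noteq> l3" "l2 \<noteq> l3"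
  shows "independent3 e1 e2 e3"
  unfolding independent3_def
proof (intro allI impI)
  fix a b c assume z: "a *\<^sub>R e1 + b *\<^sub>R e2 + c *\<^sub>R e3 = 0"
  define v where "v = a *\<^sub>R e1 + b *\<^sub>R e2 + c *\<^sub>R e3"
  have fv: "f *v v = (a * l1) *\<^sub>R e1 + (b * l2) *\<^sub>R e2 + (c * l3) *\<^sub>R e3"
    by (simp add: v_def matrix_vector_right_distrib matrix_vector_mult_scaleR assms(1-3))
  have ffv: "f *v (f *v v) = (a * l1 * l1) *\<^sub>R e1 + (b * l2 * l2) *\<^sub>R e2 + (c * l3 * l3) *\<^sub>R e3"
    by (simp add: fv matrix_vector_right_distrib matrix_vector_mult_scaleR assms(1-3))
  have "((l1-y)*(l1-z)*a) *\<^sub>R e1 + ((l2-y)*(l2-z)*b) *\<^sub>R e2 + ((l3-y)*(l3-z)*c) *\<^sub>R e3 =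
     ((a * l1 * l1) *\<^sub>R e1 + (b * l2 * l2) *\<^sub>R e2 + (c * l3 * l3) *\<^sub>R e3)
     - (y + z) *\<^sub>R ((a * l1) *\<^sub>R e1 + (b * l2) *\<^sub>R e2 + (c * l3) *\<^sub>R e3)
     + (y * z) *\<^sub>R (a *\<^sub>R e1 + b *\<^sub>R e2 + c *\<^sub>R e3)" for y z
    by (simp add: vec_eq_iff algebra_simps)
  then have key: "((l1-y)*(l1-z)*a) *\<^sub>R e1 + ((l2-y)*(l2-z)*b) *\<^sub>R e2 + ((l3-y)*(l3-z)*c) *\<^sub>R e3 = 0"
    for y z
    using z fv ffv by (simp add: v_def)
  have "((l1-l2)*(l1-l3)*a) *\<^sub>R e1 = 0" "((l2-l1)*(l2-l3)*b) *\<^sub>R e2 = 0"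
    "((l3-l1)*(l3-l2)*c) *\<^sub>R e3 = 0"
    using key[of l2 l3] key[of l1 l3] key[of l1 l2] by simp_all
  then show "a = 0 \<and> b = 0 \<and> c = 0" using assms(4-9) by simp
qed

lemma eventually_at_right_0_less:
  assumes "0 < c"
  shows "\<forall>\<^sub>F x in at_right (0::real). C * x < c"
proof -
  have "((\<lambda>x. C * x) \<longlongrightarrow> C * 0) (at_right (0::real))" by (intro tendsto_intros)
  then show ?thesis using assms by (simp add: order_tendstoD(2))
qed

lemma eventually_at_right_0_exists_pos:
  assumes "eventually P (at_right (0::real))"
  shows "\<exists>x>0. P x"
proof -
  have "\<forall>\<^sub>F x in at_right (0::real). 0 < x \<and> P x"
    using eventually_at_right_less assms by (rule eventually_conj)
  then show ?thesis using eventually_happens'[of "at_right (0::real)" "\<lambda>x. 0 < x \<and> P x"] by simp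
qed

lemma eventually_le_power:
  "(q::real) > 1 \<Longrightarrow> \<forall>\<^sub>F n in sequentially. C \<le> q ^ n"
proof -
  assume q: "q > 1"
  obtain N where "C < q ^ N" using real_arch_pow[OF q] by blast
  then have "\<forall>n\<ge>N. C \<le> q ^ n" using q by (meson less_imp_le order.strict_trans2 power_increasing)
  then show ?thesis by (auto simp: eventually_sequentially)
qed

lemma eventually_mult_power_le:
  fixes p q c C :: real
  assumes "0 < q" "q < p" "0 < c"
  shows "\<forall>\<^sub>F n in sequentially. C * q ^ n \<le> c * p ^ n"
proof -
  have "\<forall>\<^sub>F n in sequentially. C / c \<le> (p / q) ^ n"
    using assms by (intro eventually_le_power) simp
  then show ?thesis
    by (rule eventually_mono) (use assms in \<open>simp add: power_divide field_simps\<close>)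
qed

lemma dominated_coord_expansion:
  fixes ya yb yc :: "vec3 \<Rightarrow> real" and w v :: vec3
  assumes e: "ya w = \<alpha> * ya v" "yb w = \<beta>b * yb v" "yc w = \<beta>c * yc v"
    and b: "\<bar>\<beta>b\<bar> \<le> \<gamma>" "\<bar>\<beta>c\<bar> \<le> \<gamma>"
    and K: "\<bar>yb v\<bar> \<le> K * norm v" "\<bar>yc v\<bar> \<le> K * norm v" "\<bar>ya w\<bar> \<le> K * norm w" "K > 0"
    and d: "0 \<le> \<delta>" "2 * K * \<gamma> \<le> \<delta> * \<kappa> * \<bar>\<alpha>\<bar>" "2 * K \<le> \<kappa> * \<bar>\<alpha>\<bar>"
    and lb: "\<kappa> * norm v \<le> \<bar>ya v\<bar>"
  shows "\<bar>yb w\<bar> + \<bar>yc w\<bar> \<le> \<delta> * \<bar>ya w\<bar>" "2 * norm v \<le> norm w"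
proof -
  have g0: "\<gamma> \<ge> 0" using b by linarith
  have "\<bar>yb w\<bar> \<le> \<gamma> * (K * norm v)" "\<bar>yc w\<bar> \<le> \<gamma> * (K * norm v)"
    using e(2,3) b K(1,2) g0 by (simp_all add: abs_mult mult_mono)
  then have "\<bar>yb w\<bar> + \<bar>yc w\<bar> \<le> (2 * K * \<gamma>) * norm v" by (simp add: algebra_simps)
  also have "\<dots> \<le> (\<delta> * \<kappa> * \<bar>\<alpha>\<bar>) * norm v" using d(2) by (simp add: mult_right_mono)
  also have "\<dots> = (\<delta> * \<bar>\<alpha>\<bar>) * (\<kappa> * norm v)" by (simp add: algebra_simps)
  also have "\<dots> \<le> (\<delta> * \<bar>\<alpha>\<bar>) * \<bar>ya v\<bar>" using lb d(1) by (simp add: mult_left_mono)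
  also have "\<dots> = \<delta> * \<bar>ya w\<bar>" using e(1) by (simp add: abs_mult)
  finally show "\<bar>yb w\<bar> + \<bar>yc w\<bar> \<le> \<delta> * \<bar>ya w\<bar>" .
  have "K * (2 * norm v) \<le> (\<kappa> * \<bar>\<alpha>\<bar>) * norm v"
    using mult_right_mono[OF d(3) norm_ge_zero] by (simp add: algebra_simps)
  also have "\<dots> \<le> \<bar>\<alpha>\<bar> * \<bar>ya v\<bar>"
    using mult_left_mono[OF lb abs_ge_zero[of \<alpha>]] by (simp add: algebra_simps)
  also have "\<dots> = \<bar>ya w\<bar>" using e(1) by (simp add: abs_mult)
  also have "\<dots> \<le> K * norm w" by (rule K(3))
  finally show "2 * norm v \<le> norm w" using K(4) by simp
qed

lemma zero_if_dominated_by_small: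
  fixes v :: vec3
  assumes "\<bar>z\<bar> \<le> \<delta> * \<bar>y\<bar>" "\<bar>y\<bar> \<le> K * norm v" "\<kappa> * norm v \<le> \<bar>z\<bar>" "K * \<delta> < \<kappa>" "0 \<le> \<delta>"
  shows "v = 0"
proof (rule ccontr)
  assume "v \<noteq> 0"
  have "\<bar>z\<bar> \<le> \<delta> * (K * norm v)" using assms(1,2,5) by (meson mult_left_mono order_trans)
  also have "\<dots> = (K * \<delta>) * norm v" by simp
  also have "\<dots> < \<kappa> * norm v" using assms(4) \<open>v \<noteq> 0\<close> by (simp add: mult_strict_right_mono)
  finally show False using assms(3) by simp
qed

lemma lower_bound_near_line:
  fixes F :: "vec3 \<Rightarrow> real"
  assumes "v = a *\<^sub>R e + r" "norm r \<le> \<eta> * \<bar>a\<bar>" "\<bar>a\<bar> * Fe - K * norm r \<le> F v"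
    "norm e \<le> E" "K * \<eta> \<le> Fe / 2" "\<eta> \<le> E" "0 \<le> \<eta>" "0 \<le> K" "E > 0"
  shows "Fe / (4 * E) * norm v \<le> F v" "\<bar>a\<bar> * Fe / 2 \<le> F v"
proof -
  have "0 \<le> K * \<eta>" using assms(7,8) by simp
  then have Fe: "Fe \<ge> 0" using assms(5) by linarith
  have "K * norm r \<le> (K * \<eta>) * \<bar>a\<bar>" using mult_left_mono[OF assms(2,8)] by (simp add: mult.assoc)
  also have "\<dots> \<le> Fe / 2 * \<bar>a\<bar>" by (rule mult_right_mono[OF assms(5) abs_ge_zero])
  finally show Fv: "\<bar>a\<bar> * Fe / 2 \<le> F v" using assms(3) by (simp add: field_simps)
  have "norm v \<le> \<bar>a\<bar> * norm e + norm r" using assms(1) norm_triangle_ineq[of "a *\<^sub>R e" r] by simp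
  also have "\<dots> \<le> \<bar>a\<bar> * E + E * \<bar>a\<bar>"
    using assms(2,4,6) by (intro add_mono mult_left_mono order_trans[OF assms(2)] mult_right_mono) auto
  finally have "norm v \<le> 2 * E * \<bar>a\<bar>" by simp
  then have "Fe / (4 * E) * norm v \<le> Fe / (4 * E) * (2 * E * \<bar>a\<bar>)"
    using Fe assms(9) by (intro mult_left_mono) auto
  also have "\<dots> = \<bar>a\<bar> * Fe / 2" using assms(9) by (simp add: field_simps)
  finally show "Fe / (4 * E) * norm v \<le> F v" using Fv by linarith
qed

lemma linear_lower_bound_near_line:
  fixes y :: "vec3 \<Rightarrow> real"
  assumes "linear y" "\<And>v. \<bar>y v\<bar> \<le> K * norm v"
    and "v = a *\<^sub>R e + r" "norm r \<le> \<eta> * \<bar>a\<bar>"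
    and "norm e \<le> E" "K * \<eta> \<le> \<bar>y e\<bar> / 2" "\<eta> \<le> E" "0 \<le> \<eta>" "0 \<le> K" "E > 0"
  shows "\<bar>y e\<bar> / (4 * E) * norm v \<le> \<bar>y v\<bar>"
proof (rule lower_bound_near_line(1)[OF assms(3,4) _ assms(5-10)])
  have "\<bar>y v\<bar> = \<bar>a * y e + y r\<bar>" using assms(1,3) by (simp add: linear_add linear_scale)
  then show "\<bar>a\<bar> * \<bar>y e\<bar> - K * norm r \<le> \<bar>y v\<bar>" using assms(2)[of r] by (simp add: abs_mult)
qed

lemma lower_bound_mono: "\<kappa> \<le> c \<Longrightarrow> c * norm v \<le> X \<Longrightarrow> \<kappa> * norm v \<le> X"
  by (meson mult_right_mono norm_ge_zero order_trans)

section \<open>The eigen-coordinates of \<open>f\<close>\<close>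

locale f_eigencoords =
  fixes f :: mat3 and au ac as :: real and eu ec es :: vec3 and xu xc xs :: "vec3 \<Rightarrow> real"
  assumes f_SL: "f \<in> SL3"
    and moduli: "\<bar>au\<bar> > \<bar>ac\<bar>" "\<bar>ac\<bar> > \<bar>as\<bar>"
    and eigvec: "f *v eu = au *\<^sub>R eu" "f *v ec = ac *\<^sub>R ec" "f *v es = as *\<^sub>R es"
    and eigsp: "eigsp f au = span {eu}" "eigsp f ac = span {ec}" "eigsp f as = span {es}"
    and coord_linear: "linear xu" "linear xc" "linear xs"
    and coord_basis: "\<And>a b c. xu (a *\<^sub>R eu + b *\<^sub>R ec + c *\<^sub>R es) = a"
      "\<And>a b c. xc (a *\<^sub>R eu + b *\<^sub>R ec + c *\<^sub>R es) = b"
      "\<And>a b c. xs (a *\<^sub>R eu + b *\<^sub>R ec + c *\<^sub>R es) = c"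
    and coord_expansion: "\<And>v. v = xu v *\<^sub>R eu + xc v *\<^sub>R ec + xs v *\<^sub>R es"
begin

lemma coord_simps:
  "xu (v + w) = xu v + xu w" "xc (v + w) = xc v + xc w" "xs (v + w) = xs v + xs w"
  "xu (r *\<^sub>R v) = r * xu v" "xc (r *\<^sub>R v) = r * xc v" "xs (r *\<^sub>R v) = r * xs v"
  "xu 0 = 0" "xc 0 = 0" "xs 0 = 0"
  using coord_linear by (simp_all add: linear_add linear_scale linear_0)

lemma coord_eigvec:
  "xu eu = 1" "xc eu = 0" "xs eu = 0" "xu ec = 0" "xc ec = 1" "xs ec = 0"
  "xu es = 0" "xc es = 0" "xs es = 1"
  using coord_basis[of 1 0 0] coord_basis[of 0 1 0] coord_basis[of 0 0 1] by simp_all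

lemma eigvec_nonzero: "eu \<noteq> 0" "ec \<noteq> 0" "es \<noteq> 0"
  using coord_eigvec coord_simps by auto

lemma eigenvalue_product: "au * ac * as = 1"
proof -
  have "independent3 eu ec es"
    unfolding independent3_def using coord_basis coord_simps by metis
  then have "det f = au * ac * as" using det_eq_prod_eigenvalues eigvec by blast
  then show ?thesis using f_SL by (simp add: SL3_def)
qed

lemma eigenvalues_nonzero: "au \<noteq> 0" "ac \<noteq> 0" "as \<noteq> 0"
  using eigenvalue_product by auto

lemma abs_au_gt_1: "\<bar>au\<bar> > 1" and abs_as_lt_1: "\<bar>as\<bar> < 1"
proof -
  have prod: "\<bar>au\<bar> * \<bar>ac\<bar> * \<bar>as\<bar> = 1"
    using eigenvalue_product by (metis abs_mult abs_one)
  show "\<bar>au\<bar> > 1"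
  proof (rule ccontr)
    assume "\<not> \<bar>au\<bar> > 1"
    then have "\<bar>au\<bar> * \<bar>ac\<bar> \<le> 1" using moduli by (intro mult_le_one) auto
    then have "\<bar>au\<bar> * \<bar>ac\<bar> * \<bar>as\<bar> \<le> \<bar>as\<bar>" by (simp add: mult_left_le_one_le)
    then show False using prod moduli \<open>\<not> \<bar>au\<bar> > 1\<close> by linarith
  qed
  show "\<bar>as\<bar> < 1"
  proof (rule ccontr)
    assume "\<not> \<bar>as\<bar> < 1"
    then have "1 < \<bar>au\<bar> * \<bar>ac\<bar>" using moduli by (intro less_1_mult) auto
    moreover have "\<bar>au\<bar> * \<bar>ac\<bar> * 1 \<le> \<bar>au\<bar> * \<bar>ac\<bar> * \<bar>as\<bar>"
      using \<open>\<not> \<bar>as\<bar> < 1\<close> by (intro mult_left_mono) auto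
    ultimately have "1 < \<bar>au\<bar> * \<bar>ac\<bar> * \<bar>as\<bar>" by linarith
    then show False using prod by simp
  qed
qed

lemma coord_f: "xu (f *v v) = au * xu v" "xc (f *v v) = ac * xc v" "xs (f *v v) = as * xs v"
proof -
  have "f *v v = (au * xu v) *\<^sub>R eu + (ac * xc v) *\<^sub>R ec + (as * xs v) *\<^sub>R es"
    by (subst coord_expansion[of v])
      (simp add: matrix_vector_right_distrib matrix_vector_mult_scaleR eigvec mult.commute)
  then show "xu (f *v v) = au * xu v" "xc (f *v v) = ac * xc v" "xs (f *v v) = as * xs v"
    by (simp_all only: coord_basis)
qed

lemma coord_mpow_f: "xu (mpow f n *v v) = au ^ n * xu v" "xc (mpow f n *v v) = ac ^ n * xc v"
    "xs (mpow f n *v v) = as ^ n * xs v"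
  by (induction n) (simp_all only: mpow_Suc_mult_vec coord_f, simp_all add: matrix_vector_mul_lid)

lemma coord_inverse_mpow_f:
  assumes "mpow f n ** A = mat 1"
  shows "xu (A *v v) = (1 / au) ^ n * xu v" "xc (A *v v) = (1 / ac) ^ n * xc v"
     "xs (A *v v) = (1 / as) ^ n * xs v"
proof -
  have v: "v = mpow f n *v (A *v v)" by (simp add: matrix_vector_mul_assoc assms matrix_vector_mul_lid)
  have "xu v = au ^ n * xu (A *v v)" "xc v = ac ^ n * xc (A *v v)" "xs v = as ^ n * xs (A *v v)"
    by (subst v, simp add: coord_mpow_f)+
  then show "xu (A *v v) = (1 / au) ^ n * xu v" "xc (A *v v) = (1 / ac) ^ n * xc v"
     "xs (A *v v) = (1 / as) ^ n * xs v"
    using eigenvalues_nonzero by (simp_all add: power_one_over field_simps)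
qed

lemma dsum_eigsp_s_c: "dsum (eigsp f as) (eigsp f ac) = {v. xu v = 0}"
proof
  show "dsum (eigsp f as) (eigsp f ac) \<subseteq> {v. xu v = 0}"
    by (auto simp: dsum_def eigsp span_singleton coord_simps coord_eigvec)
  show "{v. xu v = 0} \<subseteq> dsum (eigsp f as) (eigsp f ac)"
  proof
    fix v assume "v \<in> {v. xu v = 0}"
    then have "v = xs v *\<^sub>R es + xc v *\<^sub>R ec" using coord_expansion[of v] by (simp add: add.commute)
    then show "v \<in> dsum (eigsp f as) (eigsp f ac)" by (auto simp: dsum_def eigsp span_singleton)
  qed
qed

lemma dsum_eigsp_u_c: "dsum (eigsp f au) (eigsp f ac) = {v. xs v = 0}"
proof
  show "dsum (eigsp f au) (eigsp f ac) \<subseteq> {v. xs v = 0}"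
    by (auto simp: dsum_def eigsp span_singleton coord_simps coord_eigvec)
  show "{v. xs v = 0} \<subseteq> dsum (eigsp f au) (eigsp f ac)"
  proof
    fix v assume "v \<in> {v. xs v = 0}"
    then have "v = xu v *\<^sub>R eu + xc v *\<^sub>R ec" using coord_expansion[of v] by simp
    then show "v \<in> dsum (eigsp f au) (eigsp f ac)" by (auto simp: dsum_def eigsp span_singleton)
  qed
qed

lemma coord_bound: "\<exists>K>0. \<forall>v. \<bar>xu v\<bar> \<le> K * norm v \<and> \<bar>xc v\<bar> \<le> K * norm v \<and> \<bar>xs v\<bar> \<le> K * norm v"
proof -
  obtain K1 K2 K3 where "K1 > 0" "K2 > 0" "K3 > 0"
    "\<And>v. \<bar>xu v\<bar> \<le> K1 * norm v" "\<And>v. \<bar>xc v\<bar> \<le> K2 * norm v" "\<And>v. \<bar>xs v\<bar> \<le> K3 * norm v"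
    using linear_bounded_pos[OF coord_linear(1)] linear_bounded_pos[OF coord_linear(2)]
      linear_bounded_pos[OF coord_linear(3)] by (metis real_norm_def)
  then show ?thesis
    by (intro exI[of _ "K1 + K2 + K3"]) (smt (verit) mult_right_mono norm_ge_zero)
qed

end

lemma f_eigencoords_exists:
  assumes "f \<in> SL3" "dim (eigsp f au) = 1" "dim (eigsp f ac) = 1" "dim (eigsp f as) = 1"
    and "\<bar>au\<bar> > \<bar>ac\<bar>" "\<bar>ac\<bar> > \<bar>as\<bar>"
  shows "\<exists>eu ec es xu xc xs. f_eigencoords f au ac as eu ec es xu xc xs"
proof -
  obtain eu ec es where eu: "eu \<noteq> 0" "f *v eu = au *\<^sub>R eu" "eigsp f au = span {eu}"
    and ec: "ec \<noteq> 0" "f *v ec = ac *\<^sub>R ec" "eigsp f ac = span {ec}"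
    and es: "es \<noteq> 0" "f *v es = as *\<^sub>R es" "eigsp f as = span {es}"
    using eigsp_dim_1 assms(2-4) by metis
  have "au \<noteq> ac" "au \<noteq> as" "ac \<noteq> as" using assms(5,6) by auto
  then have "independent3 eu ec es"
    using independent3_eigenvectors[OF eu(2) ec(2) es(2) eu(1) ec(1) es(1)] by blast
  then obtain xu xc xs where "linear xu" "linear xc" "linear xs"
    "\<forall>a b c. xu (a *\<^sub>R eu + b *\<^sub>R ec + c *\<^sub>R es) = a \<and> xc (a *\<^sub>R eu + b *\<^sub>R ec + c *\<^sub>R es) = b
        \<and> xs (a *\<^sub>R eu + b *\<^sub>R ec + c *\<^sub>R es) = c"
    "\<forall>v. v = xu v *\<^sub>R eu + xc v *\<^sub>R ec + xs v *\<^sub>R es"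
    using coordinates3_exist by blast
  then have "f_eigencoords f au ac as eu ec es xu xc xs"
    unfolding f_eigencoords_def using assms(1,5,6) eu ec es by blast
  then show ?thesis by blast
qed

context f_eigencoords
begin

definition cone_u :: "real \<Rightarrow> vec3 \<Rightarrow> bool" where
  "cone_u \<delta> v \<longleftrightarrow> \<bar>xc v\<bar> + \<bar>xs v\<bar> \<le> \<delta> * \<bar>xu v\<bar>"

definition cone_s :: "real \<Rightarrow> vec3 \<Rightarrow> bool" where
  "cone_s \<delta> v \<longleftrightarrow> \<bar>xc v\<bar> + \<bar>xu v\<bar> \<le> \<delta> * \<bar>xs v\<bar>"

lemma scale_invariant_cone_u: "scale_invariant (cone_u \<delta>)"
  and scale_invariant_cone_s: "scale_invariant (cone_s \<delta>)"
  unfolding scale_invariant_def cone_u_def cone_s_def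
  by (auto simp: coord_simps abs_mult mult.left_commute simp flip: distrib_left
      intro: mult_left_mono)

lemma eventually_cone_u_cone_s_disjoint:
  "\<forall>\<^sub>F \<delta> in at_right 0. \<forall>v. cone_u \<delta> v \<and> cone_s \<delta> v \<longrightarrow> v = 0"
proof -
  have "\<forall>\<^sub>F \<delta> in at_right (0::real). \<delta> < 1"
    using eventually_at_right_0_less[of 1 1] by simp
  then show ?thesis
  proof (rule eventually_mono, intro allI impI)
    fix \<delta> :: real and v assume "\<delta> < 1" "cone_u \<delta> v \<and> cone_s \<delta> v"
    then have u: "\<bar>xc v\<bar> + \<bar>xs v\<bar> \<le> \<delta> * \<bar>xu v\<bar>" and s: "\<bar>xc v\<bar> + \<bar>xu v\<bar> \<le> \<delta> * \<bar>xs v\<bar>"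
      by (auto simp: cone_u_def cone_s_def)
    then have sum: "\<bar>xu v\<bar> + \<bar>xs v\<bar> \<le> \<delta> * (\<bar>xu v\<bar> + \<bar>xs v\<bar>)"
      using abs_ge_zero[of "xc v"] unfolding distrib_left by linarith
    have "\<bar>xu v\<bar> + \<bar>xs v\<bar> = 0"
    proof (rule ccontr)
      assume "\<bar>xu v\<bar> + \<bar>xs v\<bar> \<noteq> 0"
      then have "\<delta> * (\<bar>xu v\<bar> + \<bar>xs v\<bar>) < 1 * (\<bar>xu v\<bar> + \<bar>xs v\<bar>)"
        using \<open>\<delta> < 1\<close> by (intro mult_strict_right_mono) auto
      then show False using sum by simp
    qed
    then have "xu v = 0" "xs v = 0" by auto
    moreover from u this have "xc v = 0" by simp
    ultimately    show "v = 0" using coord_expansion[of v] by simp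
  qed
qed

lemma eventually_cone_u_cone_s_small_coord:
  assumes "0 < \<kappa>"
  shows "\<forall>\<^sub>F \<delta> in at_right 0. (\<forall>v. cone_u \<delta> v \<and> \<kappa> * norm v \<le> \<bar>xs v\<bar> \<longrightarrow> v = 0)
    \<and> (\<forall>v. cone_s \<delta> v \<and> \<kappa> * norm v \<le> \<bar>xu v\<bar> \<longrightarrow> v = 0)"
proof -
  obtain K where K: "\<And>v. \<bar>xu v\<bar> \<le> K * norm v \<and> \<bar>xs v\<bar> \<le> K * norm v" using coord_bound by blast
  have "\<forall>\<^sub>F \<delta> in at_right 0. 0 < \<delta> \<and> K * \<delta> < \<kappa>"
    using eventually_at_right_less eventually_at_right_0_less[OF assms] by (rule eventually_conj)
  then show ?thesis
  proof (rule eventually_mono, safe)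
    fix \<delta> :: real and v assume \<delta>: "0 < \<delta>" "K * \<delta> < \<kappa>"
    show "v = 0" if "cone_u \<delta> v" "\<kappa> * norm v \<le> \<bar>xs v\<bar>"
      using that \<delta> K[of v] abs_ge_zero[of "xc v"]
      by (intro zero_if_dominated_by_small[of "xs v" \<delta> "xu v" K]) (auto simp: cone_u_def)
    show "v = 0" if "cone_s \<delta> v" "\<kappa> * norm v \<le> \<bar>xu v\<bar>"
      using that \<delta> K[of v] abs_ge_zero[of "xc v"]
      by (intro zero_if_dominated_by_small[of "xu v" \<delta> "xs v" K]) (auto simp: cone_s_def)
  qed
qed

lemma eventually_mpow_f_into_cone_u:
  assumes "0 < \<kappa>" "0 < \<delta>"
  shows "\<forall>\<^sub>F n in sequentially. \<forall>v. \<kappa> * norm v \<le> \<bar>xu v\<bar> \<longrightarrow>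
    cone_u \<delta> (mpow f n *v v) \<and> 2 * norm v \<le> norm (mpow f n *v v)"
proof -
  obtain K where K: "K > 0" "\<And>v. \<bar>xu v\<bar> \<le> K * norm v \<and> \<bar>xc v\<bar> \<le> K * norm v \<and> \<bar>xs v\<bar> \<le> K * norm v"
    using coord_bound by blast
  have "\<forall>\<^sub>F n in sequentially. 2 * K * \<bar>ac\<bar> ^ n \<le> \<delta> * \<kappa> * \<bar>au\<bar> ^ n \<and> 2 * K * 1 ^ n \<le> \<kappa> * \<bar>au\<bar> ^ n"
    using assms moduli abs_au_gt_1 eigenvalues_nonzero
    by (intro eventually_conj eventually_mult_power_le) auto
  then show ?thesis
  proof (rule eventually_mono, intro allI impI)
    fix n v assume n: "2 * K * \<bar>ac\<bar> ^ n \<le> \<delta> * \<kappa> * \<bar>au\<bar> ^ n \<and> 2 * K * 1 ^ n \<le> \<kappa> * \<bar>au\<bar> ^ n"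
      and v: "\<kappa> * norm v \<le> \<bar>xu v\<bar>"
    have "\<bar>ac ^ n\<bar> \<le> \<bar>ac\<bar> ^ n" "\<bar>as ^ n\<bar> \<le> \<bar>ac\<bar> ^ n"
      using moduli by (simp_all add: power_abs power_mono)
    from dominated_coord_expansion[OF coord_mpow_f[of n v] this K(2)[THEN conjunct2, THEN conjunct1]
        K(2)[THEN conjunct2, THEN conjunct2] K(2)[THEN conjunct1] K(1), where \<delta>=\<delta> and \<kappa>=\<kappa>] n v assms
    show "cone_u \<delta> (mpow f n *v v) \<and> 2 * norm v \<le> norm (mpow f n *v v)"
      by (simp add: cone_u_def power_abs)
  qed
qed

lemma eventually_inv_mpow_f_into_cone_s:
  assumes "0 < \<kappa>" "0 < \<delta>"
  shows "\<forall>\<^sub>F n in sequentially. \<forall>v. \<kappa> * norm v \<le> \<bar>xs v\<bar> \<longrightarrow>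
    cone_s \<delta> (matrix_inv (mpow f n) *v v) \<and> 2 * norm v \<le> norm (matrix_inv (mpow f n) *v v)"
proof -
  obtain K where K: "K > 0" "\<And>v. \<bar>xu v\<bar> \<le> K * norm v \<and> \<bar>xc v\<bar> \<le> K * norm v \<and> \<bar>xs v\<bar> \<le> K * norm v"
    using coord_bound by blast
  have "\<forall>\<^sub>F n in sequentially. 2 * K * (1 / \<bar>ac\<bar>) ^ n \<le> \<delta> * \<kappa> * (1 / \<bar>as\<bar>) ^ n
      \<and> 2 * K * 1 ^ n \<le> \<kappa> * (1 / \<bar>as\<bar>) ^ n"
    using assms moduli abs_as_lt_1 eigenvalues_nonzero
    by (intro eventually_conj eventually_mult_power_le) (auto simp: frac_less2)
  then show ?thesis
  proof (rule eventually_mono, intro allI impI)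
    fix n v assume n: "2 * K * (1 / \<bar>ac\<bar>) ^ n \<le> \<delta> * \<kappa> * (1 / \<bar>as\<bar>) ^ n
      \<and> 2 * K * 1 ^ n \<le> \<kappa> * (1 / \<bar>as\<bar>) ^ n"
      and v: "\<kappa> * norm v \<le> \<bar>xs v\<bar>"
    note inv = matrix_inv_invertible(1)[OF invertible_mpow_SL3[OF f_SL]]
    have "\<bar>(1 / ac) ^ n\<bar> \<le> (1 / \<bar>ac\<bar>) ^ n" "\<bar>(1 / au) ^ n\<bar> \<le> (1 / \<bar>ac\<bar>) ^ n"
      using moduli eigenvalues_nonzero by (simp_all add: power_abs power_mono frac_le)
    from dominated_coord_expansion[OF coord_inverse_mpow_f(3,2,1)[OF inv, where v=v] this
        K(2)[THEN conjunct2, THEN conjunct1] K(2)[THEN conjunct1] K(2)[THEN conjunct2, THEN conjunct2] K(1), where \<delta>=\<delta> and \<kappa>=\<kappa>]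
      n v assms
    show "cone_s \<delta> (matrix_inv (mpow f n) *v v) \<and> 2 * norm v \<le> norm (matrix_inv (mpow f n) *v v)"
      by (simp add: cone_s_def power_abs)
  qed
qed

lemma norm_cone_u_remainder:
  assumes "cone_u \<delta> v"
  shows "norm (xc v *\<^sub>R ec + xs v *\<^sub>R es) \<le> ((norm ec + norm es) * \<delta>) * \<bar>xu v\<bar>"
proof -
  have "norm (xc v *\<^sub>R ec + xs v *\<^sub>R es) \<le> \<bar>xc v\<bar> * norm ec + \<bar>xs v\<bar> * norm es"
    using norm_triangle_ineq[of "xc v *\<^sub>R ec" "xs v *\<^sub>R es"] by simp
  also have "\<dots> \<le> (\<bar>xc v\<bar> + \<bar>xs v\<bar>) * (norm ec + norm es)"
    using mult_nonneg_nonneg[of "\<bar>xc v\<bar>" "norm es"] mult_nonneg_nonneg[of "\<bar>xs v\<bar>" "norm ec"]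
    by (simp add: algebra_simps)
  also have "\<dots> \<le> (\<delta> * \<bar>xu v\<bar>) * (norm ec + norm es)"
    using assms by (intro mult_right_mono) (auto simp: cone_u_def)
  finally show ?thesis by (simp add: algebra_simps)
qed

lemma norm_cone_s_remainder:
  assumes "cone_s \<delta> v"
  shows "norm (xc v *\<^sub>R ec + xu v *\<^sub>R eu) \<le> ((norm ec + norm eu) * \<delta>) * \<bar>xs v\<bar>"
proof -
  have "norm (xc v *\<^sub>R ec + xu v *\<^sub>R eu) \<le> \<bar>xc v\<bar> * norm ec + \<bar>xu v\<bar> * norm eu"
    using norm_triangle_ineq[of "xc v *\<^sub>R ec" "xu v *\<^sub>R eu"] by simp
  also have "\<dots> \<le> (\<bar>xc v\<bar> + \<bar>xu v\<bar>) * (norm ec + norm eu)"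
    using mult_nonneg_nonneg[of "\<bar>xc v\<bar>" "norm eu"] mult_nonneg_nonneg[of "\<bar>xu v\<bar>" "norm ec"]
    by (simp add: algebra_simps)
  also have "\<dots> \<le> (\<delta> * \<bar>xs v\<bar>) * (norm ec + norm eu)"
    using assms by (intro mult_right_mono) (auto simp: cone_s_def)
  finally show ?thesis by (simp add: algebra_simps)
qed

end

section \<open>The splitting of \<open>g\<^sup>m\<close>\<close>

locale gm_splitting =
  fixes g :: mat3 and m :: nat and \<mu> :: real and l0 :: vec3
    and xl :: "vec3 \<Rightarrow> real" and pP :: "vec3 \<Rightarrow> vec3"
  assumes g_SL: "g \<in> SL3" and m_pos: "m > 0" and mu: "\<mu> > 1"
    and l0: "mpow g m *v l0 = (\<mu> powr (-2)) *\<^sub>R l0" "eigsp (mpow g m) (\<mu> powr (-2)) = span {l0}"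
    and split_linear: "linear xl" "linear pP"
    and pP_in_P0: "\<And>v. mpow g m *v pP v = \<mu> *\<^sub>R pP v"
    and split: "\<And>v. v = pP v + xl v *\<^sub>R l0"
    and split_unique: "\<And>p t. mpow g m *v p = \<mu> *\<^sub>R p \<Longrightarrow> pP (p + t *\<^sub>R l0) = p \<and> xl (p + t *\<^sub>R l0) = t"
begin

definition \<nu> where "\<nu> = root m \<mu>"

definition \<beta> where "\<beta> = xl (g *v l0)"

lemma nu: "\<nu> > 1" "\<nu> ^ m = \<mu>"
  using mu m_pos by (auto simp: \<nu>_def)

lemma split_simps:
  "xl (v + w) = xl v + xl w" "pP (v + w) = pP v + pP w"
  "xl (r *\<^sub>R v) = r * xl v" "pP (r *\<^sub>R v) = r *\<^sub>R pP v" "xl 0 = 0" "pP 0 = 0"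
  "xl (v - w) = xl v - xl w" "pP (v - w) = pP v - pP w"
  using split_linear by (simp_all add: linear_add linear_scale linear_0 linear_diff)

lemma split_P0: "mpow g m *v p = \<mu> *\<^sub>R p \<Longrightarrow> pP p = p \<and> xl p = 0"
  using split_unique[of p 0] by simp

lemma split_l0: "xl l0 = 1" "pP l0 = 0"
  using split_unique[of 0 1] by simp_all

lemma l0_nonzero: "l0 \<noteq> 0"
  using split_l0 split_simps by auto

lemma P0_mult_vec_g:
  assumes "mpow g m *v p = \<mu> *\<^sub>R p"
  shows "mpow g m *v (g *v p) = \<mu> *\<^sub>R (g *v p)"
proof -
  have "mpow g m *v (g *v p) = g *v (mpow g m *v p)"
    by (simp add: matrix_vector_mul_assoc mpow_commute)
  then show ?thesis by (simp add: assms matrix_vector_mult_scaleR)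
qed

lemma P0_mult_vec_mpow_g:
  "mpow g m *v p = \<mu> *\<^sub>R p \<Longrightarrow> mpow g m *v (mpow g n *v p) = \<mu> *\<^sub>R (mpow g n *v p)"
  by (induction n) (simp_all add: matrix_vector_mul_lid mpow_Suc_mult_vec P0_mult_vec_g del: mpow.simps(2))

lemma g_l0: "g *v l0 = \<beta> *\<^sub>R l0"
proof -
  have "mpow g m *v (g *v l0) = g *v (mpow g m *v l0)"
    by (simp add: matrix_vector_mul_assoc mpow_commute)
  then have "g *v l0 \<in> eigsp (mpow g m) (\<mu> powr (-2))" by (simp add: eigsp_def l0 matrix_vector_mult_scaleR)
  then obtain k where k: "g *v l0 = k *\<^sub>R l0" using l0(2) by (auto simp: span_singleton)
  then have "\<beta> = k" by (simp add: \<beta>_def split_simps split_l0)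
  then show ?thesis using k by simp
qed

lemma split_g: "pP (g *v v) = g *v pP v" "xl (g *v v) = \<beta> * xl v"
proof -
  have "g *v v = g *v pP v + (\<beta> * xl v) *\<^sub>R l0"
    by (subst split[of v]) (simp add: matrix_vector_right_distrib matrix_vector_mult_scaleR g_l0 mult.commute)
  then show "pP (g *v v) = g *v pP v" "xl (g *v v) = \<beta> * xl v"
    using split_unique[OF P0_mult_vec_g[OF pP_in_P0]] by simp_all
qed

lemma split_mpow_g: "pP (mpow g n *v v) = mpow g n *v pP v" "xl (mpow g n *v v) = \<beta> ^ n * xl v"
  by (induction n) (simp_all add: matrix_vector_mul_lid mpow_Suc_mult_vec split_g del: mpow.simps(2))

lemma abs_beta: "\<bar>\<beta>\<bar> = 1 / \<nu>^2"
proof -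
  have "\<beta> ^ m = xl (mpow g m *v l0)" using split_mpow_g(2)[of m l0] split_l0 by simp
  also have "\<dots> = 1 / \<mu>^2" using mu by (simp add: l0 split_simps split_l0 powr_minus powr_realpow divide_inverse)
  moreover have "(\<nu>^2)^m = (\<nu>^m)^2" by (simp add: power_mult[symmetric] mult.commute)
  ultimately have "\<bar>\<beta>\<bar> ^ m = (1 / \<nu>^2) ^ m" using mu nu by (simp add: power_abs[symmetric] power_one_over)
  then show ?thesis by (rule power_eq_imp_eq_base) (use m_pos in auto)
qed

lemma mpow_g_mult_P0:
  assumes "mpow g m *v p = \<mu> *\<^sub>R p"
  shows "mpow g (m * q + r) *v p = \<mu> ^ q *\<^sub>R (mpow g r *v p)"
proof (induction q)
  case (Suc q)
  have "mpow g (m * Suc q + r) *v p = mpow g m *v (mpow g (m * q + r) *v p)"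
    by (simp add: mpow_add[symmetric] add.assoc matrix_vector_mul_assoc)
  then show ?case
    using Suc P0_mult_vec_mpow_g[OF assms, of r] by (simp add: matrix_vector_mult_scaleR)
qed simp

text \<open>Averaging over a period of \<open>g\<^sup>m = \<mu>\<close> makes \<open>g\<close> act on \<open>P\<^sub>0\<close> as multiplication by
  \<open>\<nu> = \<mu>\<^bsup>1/m\<^esup>\<close> in this norm.\<close>

definition N :: "vec3 \<Rightarrow> real" where
  "N x = (\<Sum>k<m. norm (mpow g k *v x) / \<nu> ^ k)"

lemma N_g:
  assumes "mpow g m *v x = \<mu> *\<^sub>R x"
  shows "N (g *v x) = \<nu> * N x"
proof -
  define h where "h j = norm (mpow g j *v x) / \<nu> ^ j" for j
  have "h m = h 0" using assms nu mu by (simp add: h_def matrix_vector_mul_lid)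
  then have "(\<Sum>k<m. h (Suc k)) = N x"
    using sum.lessThan_Suc_shift[of h m] by (simp add: N_def h_def)
  moreover have "N (g *v x) = \<nu> * (\<Sum>k<m. h (Suc k))"
    unfolding N_def h_def sum_distrib_left
  proof (rule sum.cong)
    fix k
    have "mpow g k *v (g *v x) = mpow g (Suc k) *v x"
      by (simp only: mpow_Suc_right matrix_vector_mul_assoc)
    then show "norm (mpow g k *v (g *v x)) / \<nu> ^ k = \<nu> * (norm (mpow g (Suc k) *v x) / \<nu> ^ Suc k)"
      using nu by (simp add: field_simps)
  qed (rule refl)
  ultimately show ?thesis by simp
qed

lemma N_mpow_g: "mpow g m *v x = \<mu> *\<^sub>R x \<Longrightarrow> N (mpow g n *v x) = \<nu> ^ n * N x"
  by (induction n)
    (simp_all add: matrix_vector_mul_lid mpow_Suc_mult_vec N_g P0_mult_vec_mpow_g del: mpow.simps(2))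

lemma N_nonneg: "N x \<ge> 0"
  unfolding N_def using nu by (intro sum_nonneg) auto

lemma norm_le_N: "norm x \<le> N x"
proof -
  have "N x = norm (mpow g 0 *v x) / \<nu> ^ 0 + (\<Sum>k\<in>{..<m} - {0}. norm (mpow g k *v x) / \<nu> ^ k)"
    unfolding N_def using m_pos by (subst sum.remove[of _ 0]) auto
  moreover have "(\<Sum>k\<in>{..<m} - {0}. norm (mpow g k *v x) / \<nu> ^ k) \<ge> 0"
    using nu by (intro sum_nonneg) auto
  ultimately show ?thesis by (simp add: matrix_vector_mul_lid)
qed

lemma N_pos: "x \<noteq> 0 \<Longrightarrow> N x > 0"
  using norm_le_N[of x] by (metis zero_less_norm_iff order_less_le_trans)

lemma N_scale: "N (r *\<^sub>R x) = \<bar>r\<bar> * N x"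
  unfolding N_def sum_distrib_left by (simp add: matrix_vector_mult_scaleR)

lemma N_add: "N (x + y) \<le> N x + N y"
  unfolding N_def sum.distrib[symmetric]
  by (intro sum_mono) (simp add: matrix_vector_right_distrib add_divide_distrib[symmetric],
      rule divide_right_mono[OF norm_triangle_ineq], use nu in simp)

lemma N_bound: "\<exists>K>0. \<forall>x. N x \<le> K * norm x"
proof -
  have "\<exists>K>0. \<forall>x. norm (mpow g k *v x) \<le> K * norm x" for k
    using linear_bounded_pos[OF matrix_vector_mul_linear] .
  then obtain Kf where Kf: "\<And>k. Kf k > 0" "\<And>k x. norm (mpow g k *v x) \<le> Kf k * norm x"
    by metis
  have "N x \<le> (\<Sum>k<m. Kf k) * norm x" for x
    unfolding N_def sum_distrib_right
  proof (rule sum_mono)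
    fix k
    have "norm (mpow g k *v x) / \<nu> ^ k \<le> norm (mpow g k *v x)"
      using nu by (simp add: divide_le_eq one_le_power mult_le_cancel_left1)
    then show "norm (mpow g k *v x) / \<nu> ^ k \<le> Kf k * norm x" using Kf(2)[of k x] by linarith
  qed
  moreover have "(\<Sum>k<m. Kf k) > 0" using Kf(1) m_pos by (intro sum_pos) auto
  ultimately show ?thesis by blast
qed

definition M :: "vec3 \<Rightarrow> real" where "M v = N (pP v)"

lemma M_nonneg: "M v \<ge> 0"
  by (simp add: M_def N_nonneg)

lemma M_scale: "M (r *\<^sub>R v) = \<bar>r\<bar> * M v"
  by (simp add: M_def split_simps N_scale)

lemma norm_pP_le_M: "norm (pP v) \<le> M v"
  by (simp add: M_def norm_le_N)

lemma M_mpow_g: "M (mpow g n *v v) = \<nu> ^ n * M v"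
  unfolding M_def using split_mpow_g N_mpow_g pP_in_P0 by simp

lemma right_inverse_mpow_g: "mpow g n ** matrix_inv (mpow g n) = mat 1"
  using matrix_inv_invertible(1)[OF invertible_mpow_SL3[OF g_SL]] .

lemma split_inv_mpow_g:
  "M (matrix_inv (mpow g n) *v v) = (1 / \<nu>) ^ n * M v"
  "xl (matrix_inv (mpow g n) *v v) = (1 / \<beta>) ^ n * xl v"
proof -
  have v: "mpow g n *v (matrix_inv (mpow g n) *v v) = v"
    by (simp add: matrix_vector_mul_assoc right_inverse_mpow_g matrix_vector_mul_lid)
  have "\<beta> \<noteq> 0" using abs_beta nu by auto
  then show "M (matrix_inv (mpow g n) *v v) = (1 / \<nu>) ^ n * M v"
    "xl (matrix_inv (mpow g n) *v v) = (1 / \<beta>) ^ n * xl v"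
    using M_mpow_g[of n "matrix_inv (mpow g n) *v v"] split_mpow_g(2)[of n "matrix_inv (mpow g n) *v v"]
      nu unfolding v by (simp_all add: power_one_over field_simps)
qed

lemma split_bound: "\<exists>K>0. \<forall>v. \<bar>xl v\<bar> \<le> K * norm v \<and> M v \<le> K * norm v"
proof -
  obtain K1 where K1: "K1 > 0" "\<And>v. \<bar>xl v\<bar> \<le> K1 * norm v"
    using linear_bounded_pos[OF split_linear(1)] by (metis real_norm_def)
  obtain K2 where K2: "K2 > 0" "\<And>v. norm (pP v) \<le> K2 * norm v"
    using linear_bounded_pos[OF split_linear(2)] by metis
  obtain K3 where K3: "K3 > 0" "\<And>x. N x \<le> K3 * norm x" using N_bound by blast
  have "M v \<le> (K3 * K2) * norm v" for v
    using K3(2)[of "pP v"] mult_left_mono[OF K2(2)[of v] less_imp_le[OF K3(1)]]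
    by (simp add: M_def mult.assoc)
  then show ?thesis using K1 K2 K3
    by (intro exI[of _ "K1 + K3 * K2"]) (smt (verit) mult_pos_pos mult_right_mono norm_ge_zero)
qed

definition cone_L :: "real \<Rightarrow> vec3 \<Rightarrow> bool" where
  "cone_L \<delta> v \<longleftrightarrow> M v \<le> \<delta> * \<bar>xl v\<bar>"

lemma scale_invariant_cone_L: "scale_invariant (cone_L \<delta>)"
  unfolding scale_invariant_def cone_L_def
  by (auto simp: M_scale split_simps abs_mult mult.left_commute intro: mult_left_mono)

lemma eventually_inv_mpow_g_into_cone_L:
  assumes "0 < \<kappa>" "0 < \<delta>"
  shows "\<forall>\<^sub>F n in sequentially. \<forall>v. \<kappa> * norm v \<le> \<bar>xl v\<bar> \<longrightarrow>
    cone_L \<delta> (matrix_inv (mpow g n) *v v) \<and> 2 * norm v \<le> norm (matrix_inv (mpow g n) *v v)"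
proof -
  obtain K where K: "K > 0" "\<And>v. \<bar>xl v\<bar> \<le> K * norm v \<and> M v \<le> K * norm v"
    using split_bound by blast
  have KM: "\<bar>M v\<bar> \<le> K * norm v" for v using K(2) M_nonneg by (simp add: abs_of_nonneg)
  have "\<forall>\<^sub>F n in sequentially. 2 * K * (1 / \<nu>) ^ n \<le> \<delta> * \<kappa> * (\<nu>\<^sup>2) ^ n
      \<and> 2 * K * 1 ^ n \<le> \<kappa> * (\<nu>\<^sup>2) ^ n"
  proof (intro eventually_conj eventually_mult_power_le)
    have "1 < \<nu>\<^sup>2" using nu by (simp add: less_1_mult power2_eq_square)
    moreover have "1 / \<nu> < 1" using nu by simp
    ultimately show "1 / \<nu> < \<nu>\<^sup>2" "1 < \<nu>\<^sup>2" by simp_all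
  qed (use assms nu in auto)
  then show ?thesis
  proof (rule eventually_mono, intro allI impI)
    fix n v assume n: "2 * K * (1 / \<nu>) ^ n \<le> \<delta> * \<kappa> * (\<nu>\<^sup>2) ^ n \<and> 2 * K * 1 ^ n \<le> \<kappa> * (\<nu>\<^sup>2) ^ n"
      and v: "\<kappa> * norm v \<le> \<bar>xl v\<bar>"
    have "\<bar>(1 / \<beta>) ^ n\<bar> = (\<nu>\<^sup>2) ^ n" "\<bar>(1 / \<nu>) ^ n\<bar> \<le> (1 / \<nu>) ^ n"
      using abs_beta nu by (simp_all add: power_abs)
    from dominated_coord_expansion[OF split_inv_mpow_g(2,1,1)[where v=v] this(2) this(2)
        KM KM K(2)[THEN conjunct1] K(1), where \<delta>=\<delta> and \<kappa>=\<kappa>]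
      n v assms this(1) M_nonneg[of "matrix_inv (mpow g n) *v v"]
    show "cone_L \<delta> (matrix_inv (mpow g n) *v v) \<and> 2 * norm v \<le> norm (matrix_inv (mpow g n) *v v)"
      by (simp add: cone_L_def)
  qed
qed

lemma eventually_mpow_g_expands_P0_dominated:
  assumes "0 < \<kappa>" "0 < \<delta>"
  shows "\<forall>\<^sub>F n in sequentially. \<forall>v. \<kappa> * norm v \<le> M v \<longrightarrow>
    \<bar>xl (mpow g n *v v)\<bar> \<le> \<delta> * M (mpow g n *v v) \<and> 2 * norm v \<le> norm (mpow g n *v v)"
proof -
  obtain K where K: "K > 0" "\<And>v. \<bar>xl v\<bar> \<le> K * norm v \<and> M v \<le> K * norm v"
    using split_bound by blast
  have KM: "\<bar>M v\<bar> \<le> K * norm v" for v using K(2) M_nonneg by (simp add: abs_of_nonneg)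
  have "\<forall>\<^sub>F n in sequentially. 2 * K * (1 / \<nu>\<^sup>2) ^ n \<le> \<delta> * \<kappa> * \<nu> ^ n \<and> 2 * K * 1 ^ n \<le> \<kappa> * \<nu> ^ n"
  proof (intro eventually_conj eventually_mult_power_le)
    have "1 < \<nu>\<^sup>2" using nu by (simp add: less_1_mult power2_eq_square)
    then have "1 / \<nu>\<^sup>2 < 1" by (simp add: divide_less_eq)
    then show "1 / \<nu>\<^sup>2 < \<nu>" using nu by linarith
  qed (use assms nu in auto)
  then show ?thesis
  proof (rule eventually_mono, intro allI impI)
    fix n v assume n: "2 * K * (1 / \<nu>\<^sup>2) ^ n \<le> \<delta> * \<kappa> * \<nu> ^ n \<and> 2 * K * 1 ^ n \<le> \<kappa> * \<nu> ^ n"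
      and v: "\<kappa> * norm v \<le> M v"
    have "\<bar>\<beta> ^ n\<bar> \<le> (1 / \<nu>\<^sup>2) ^ n" using abs_beta by (simp add: power_abs)
    from dominated_coord_expansion[OF M_mpow_g[of n v] split_mpow_g(2) split_mpow_g(2) this this
        K(2)[THEN conjunct1] K(2)[THEN conjunct1] KM K(1), where \<delta>=\<delta> and \<kappa>=\<kappa>]
      n v assms nu M_nonneg
    show "\<bar>xl (mpow g n *v v)\<bar> \<le> \<delta> * M (mpow g n *v v) \<and> 2 * norm v \<le> norm (mpow g n *v v)"
      by simp
  qed
qed

end

lemma gm_splitting_exists:
  fixes g :: mat3
  assumes "g \<in> SL3" "m > 0" "\<mu> > 1"
    and P0: "dim (eigsp (mpow g m) \<mu>) = 2" and L0: "dim (eigsp (mpow g m) (\<mu> powr (-2))) = 1"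
  shows "\<exists>l0 xl pP. gm_splitting g m \<mu> l0 xl pP"
proof -
  define G where "G = mpow g m"
  define \<mu>' where "\<mu>' = \<mu> powr (-2)"
  have "\<mu>' < \<mu>"
  proof -
    have "\<mu>' < 1"
      using assms(3) by (simp add: \<mu>'_def powr_minus powr_realpow inverse_less_1_iff one_less_power)
    then show ?thesis using assms(3) by simp
  qed
  obtain l0 where l0: "l0 \<noteq> 0" "G *v l0 = \<mu>' *\<^sub>R l0" "eigsp G \<mu>' = span {l0}"
    using eigsp_dim_1[OF L0] unfolding G_def \<mu>'_def by blast
  obtain p1 p2 where Gp: "G *v p1 = \<mu> *\<^sub>R p1" "G *v p2 = \<mu> *\<^sub>R p2"
    and P0_span: "\<And>p. G *v p = \<mu> *\<^sub>R p \<Longrightarrow> \<exists>x y. p = x *\<^sub>R p1 + y *\<^sub>R p2"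
    and indep2: "\<And>x y. x *\<^sub>R p1 + y *\<^sub>R p2 = 0 \<Longrightarrow> x = 0 \<and> y = 0"
    using eigsp_dim_2[OF P0[folded G_def]] by metis
  have "independent3 p1 p2 l0"
    unfolding independent3_def
  proof (intro allI impI)
    fix a b c assume z: "a *\<^sub>R p1 + b *\<^sub>R p2 + c *\<^sub>R l0 = 0"
    have "(c * (\<mu>' - \<mu>)) *\<^sub>R l0 = G *v (a *\<^sub>R p1 + b *\<^sub>R p2 + c *\<^sub>R l0) - \<mu> *\<^sub>R (a *\<^sub>R p1 + b *\<^sub>R p2 + c *\<^sub>R l0)"
      by (simp add: matrix_vector_right_distrib matrix_vector_mult_scaleR Gp l0 algebra_simps)
    then have "c = 0" using z l0(1) \<open>\<mu>' < \<mu>\<close> by simp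
    then show "a = 0 \<and> b = 0 \<and> c = 0" using z indep2 by simp
  qed
  then obtain y1 y2 xl where y: "linear y1" "linear y2" "linear xl"
     "\<And>a b c. y1 (a *\<^sub>R p1 + b *\<^sub>R p2 + c *\<^sub>R l0) = a \<and> y2 (a *\<^sub>R p1 + b *\<^sub>R p2 + c *\<^sub>R l0) = b
        \<and> xl (a *\<^sub>R p1 + b *\<^sub>R p2 + c *\<^sub>R l0) = c"
     "\<And>v. v = y1 v *\<^sub>R p1 + y2 v *\<^sub>R p2 + xl v *\<^sub>R l0"
    using coordinates3_exist by blast
  define pP where "pP v = y1 v *\<^sub>R p1 + y2 v *\<^sub>R p2" for v
  have "linear pP" unfolding pP_def using y(1,2)
    by (intro linearI) (simp_all add: linear_add linear_scale algebra_simps)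
  moreover have "G *v pP v = \<mu> *\<^sub>R pP v" for v
    by (simp add: pP_def matrix_vector_right_distrib matrix_vector_mult_scaleR Gp algebra_simps)
  moreover have "pP (p + t *\<^sub>R l0) = p \<and> xl (p + t *\<^sub>R l0) = t" if "G *v p = \<mu> *\<^sub>R p" for p t
    using P0_span[OF that] y(4) by (auto simp: pP_def)
  ultimately have "gm_splitting g m \<mu> l0 xl pP"
    using assms(1-3) l0 y(3,5) unfolding gm_splitting_def G_def \<mu>'_def by (auto simp: pP_def)
  then show ?thesis by blast
qed

section \<open>Transversality in coordinates\<close>

locale f_gm_data = f_eigencoords f au ac as eu ec es xu xc xs + gm_splitting g m \<mu> l0 xl pP
  for f au ac as eu ec es xu xc xs g m \<mu> l0 xl pP
begin

lemma xl_ne_0_if_not_in_P0: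
  assumes "\<not> span {e} \<subseteq> eigsp (mpow g m) \<mu>"
  shows "xl e \<noteq> 0"
proof
  assume "xl e = 0"
  then have "e \<in> eigsp (mpow g m) \<mu>" using split[of e] pP_in_P0[of e] by (simp add: eigsp_def)
  then show False using assms subspace_eigsp by (simp add: span_minimal)
qed

lemma xu_l0_ne_0: "\<not> eigsp (mpow g m) (\<mu> powr (-2)) \<subseteq> dsum (eigsp f as) (eigsp f ac) \<Longrightarrow> xu l0 \<noteq> 0"
  by (auto simp: l0(2) dsum_eigsp_s_c span_singleton coord_simps)

lemma xs_l0_ne_0: "\<not> eigsp (mpow g m) (\<mu> powr (-2)) \<subseteq> dsum (eigsp f au) (eigsp f ac) \<Longrightarrow> xs l0 \<noteq> 0"
  by (auto simp: l0(2) dsum_eigsp_u_c span_singleton coord_simps)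

text \<open>The line \<open>(E \<oplus> L\<^sub>0) \<inter> P\<^sub>0\<close> of hypothesis (4) is spanned by the projection \<open>pP e\<close>.\<close>

lemma orbit_coords_ne_0:
  assumes "\<not> act (mpow g k) (dsum (span {e}) (eigsp (mpow g m) (\<mu> powr (-2))) \<inter> eigsp (mpow g m) \<mu>)
      \<subseteq> dsum (eigsp f as) (eigsp f ac) \<union> dsum (eigsp f au) (eigsp f ac)"
  shows "xu (mpow g k *v pP e) \<noteq> 0 \<and> xs (mpow g k *v pP e) \<noteq> 0"
proof -
  have line: "z \<in> range (\<lambda>a. a *\<^sub>R pP e)"
    if z_in: "z \<in> dsum (span {e}) (eigsp (mpow g m) (\<mu> powr (-2))) \<inter> eigsp (mpow g m) \<mu>" for z
  proof -
    obtain a b where z: "z = a *\<^sub>R e + b *\<^sub>R l0"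
      using z_in by (auto simp: dsum_def l0(2) span_singleton)
    have "z = pP z" using z_in split_P0 by (simp add: eigsp_def)
    also have "\<dots> = a *\<^sub>R pP e" by (simp add: z split_simps split_l0)
    finally show ?thesis by auto
  qed
  have "act (mpow g k) (dsum (span {e}) (eigsp (mpow g m) (\<mu> powr (-2))) \<inter> eigsp (mpow g m) \<mu>)
      \<subseteq> {y. \<exists>a. y = a *\<^sub>R (mpow g k *v pP e)}"
  proof
    fix y assume "y \<in> act (mpow g k) (dsum (span {e}) (eigsp (mpow g m) (\<mu> powr (-2))) \<inter> eigsp (mpow g m) \<mu>)"
    then obtain z where z: "z \<in> dsum (span {e}) (eigsp (mpow g m) (\<mu> powr (-2))) \<inter> eigsp (mpow g m) \<mu>"
      and y: "y = mpow g k *v z" by (auto simp: act_def)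
    obtain a where "z = a *\<^sub>R pP e" using line[OF z] by blast
    then show "y \<in> {y. \<exists>a. y = a *\<^sub>R (mpow g k *v pP e)}" using y by (auto simp: matrix_vector_mult_scaleR)
  qed
  then show ?thesis
    using assms unfolding dsum_eigsp_s_c dsum_eigsp_u_c by (auto simp: coord_simps)
qed

end

locale pingpong_setting = f_gm_data +
  assumes xl_eu: "xl eu \<noteq> 0" and xl_es: "xl es \<noteq> 0"
    and xu_l0: "xu l0 \<noteq> 0" and xs_l0: "xs l0 \<noteq> 0"
    and orbit_eu: "\<And>k. k < m \<Longrightarrow> xu (mpow g k *v pP eu) \<noteq> 0 \<and> xs (mpow g k *v pP eu) \<noteq> 0"
    and orbit_es: "\<And>k. k < m \<Longrightarrow> xu (mpow g k *v pP es) \<noteq> 0 \<and> xs (mpow g k *v pP es) \<noteq> 0"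
begin

section \<open>The orbit of \<open>pP eu\<close> and \<open>pP es\<close>\<close>

definition orbit :: "vec3 set" where
  "orbit = range (\<lambda>k. mpow g k *v pP eu) \<union> range (\<lambda>k. mpow g k *v pP es)"

definition orbit_ratio :: "vec3 \<Rightarrow> real" where
  "orbit_ratio d = min \<bar>xu d\<bar> \<bar>xs d\<bar> / N d"

text \<open>Up to the factors \<open>\<mu>\<^sup>q\<close>, the orbit consists of the finitely many points \<open>g\<^sup>r p\<close>, \<open>r < m\<close>,
  so the ratio is bounded below on all of it.\<close>

definition orbit_const :: real where
  "orbit_const = Min (orbit_ratio ` ((\<lambda>(r, p). mpow g r *v p) ` ({..<m} \<times> {pP eu, pP es})))"

lemma orbit_const_pos: "orbit_const > 0"
proof -
  have "orbit_ratio (mpow g r *v p) > 0" if "r < m" "p \<in> {pP eu, pP es}" for r p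
  proof -
    have "xu (mpow g r *v p) \<noteq> 0" "xs (mpow g r *v p) \<noteq> 0"
      using that orbit_eu orbit_es by auto
    moreover have "mpow g r *v p \<noteq> 0" using calculation by (auto simp: coord_simps)
    ultimately show ?thesis using N_pos[of "mpow g r *v p"] by (simp add: orbit_ratio_def)
  qed
  then show ?thesis using m_pos unfolding orbit_const_def by (subst Min_gr_iff) auto
qed

lemma orbit_props:
  assumes "d \<in> orbit"
  shows "mpow g m *v d = \<mu> *\<^sub>R d" "orbit_const * N d \<le> \<bar>xu d\<bar>" "orbit_const * N d \<le> \<bar>xs d\<bar>"
    "N d > 0" "mpow g n *v d \<in> orbit"
proof -
  obtain k p where kp: "d = mpow g k *v p" "p \<in> {pP eu, pP es}" using assms by (auto simp: orbit_def)
  then have Pp: "mpow g m *v p = \<mu> *\<^sub>R p" using pP_in_P0 by auto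
  show "mpow g m *v d = \<mu> *\<^sub>R d" using P0_mult_vec_mpow_g[OF Pp] kp by simp
  have "mpow g n *v d = mpow g (n + k) *v p" by (simp add: kp mpow_add matrix_vector_mul_assoc)
  then show "mpow g n *v d \<in> orbit" using kp(2) by (auto simp: orbit_def)
  define q r where "q = k div m" and "r = k mod m"
  have r: "r < m" using m_pos by (simp add: q_def r_def)
  have "k = m * q + r" by (simp add: q_def r_def)
  then have d: "d = \<mu> ^ q *\<^sub>R (mpow g r *v p)" using mpow_g_mult_P0[OF Pp] kp by simp
  have "orbit_const \<le> orbit_ratio (mpow g r *v p)"
    unfolding orbit_const_def using r kp(2) by (intro Min_le) auto
  moreover have "xu (mpow g r *v p) \<noteq> 0" using r kp(2) orbit_eu orbit_es by auto
  then have "N (mpow g r *v p) > 0" by (intro N_pos) (auto simp: coord_simps)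
  moreover have "\<mu> ^ q > 0" using mu by simp
  ultimately show "N d > 0" "orbit_const * N d \<le> \<bar>xu d\<bar>" "orbit_const * N d \<le> \<bar>xs d\<bar>"
    by (auto simp: d N_scale coord_simps abs_mult orbit_ratio_def pos_le_divide_eq mult.left_commute
        intro: mult_left_mono)
qed

definition near_orbit :: "real \<Rightarrow> vec3 \<Rightarrow> bool" where
  "near_orbit \<epsilon> v \<longleftrightarrow> (\<exists>d\<in>orbit. \<exists>t. N (pP v - t *\<^sub>R d) \<le> \<epsilon> * M v)"

lemma near_orbit_scale: "near_orbit \<epsilon> v \<Longrightarrow> near_orbit \<epsilon> (r *\<^sub>R v)"
proof -
  assume "near_orbit \<epsilon> v"
  then obtain d t where d: "d \<in> orbit" "N (pP v - t *\<^sub>R d) \<le> \<epsilon> * M v" by (auto simp: near_orbit_def)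
  have "pP (r *\<^sub>R v) - (r * t) *\<^sub>R d = r *\<^sub>R (pP v - t *\<^sub>R d)" by (simp add: split_simps algebra_simps)
  then have "N (pP (r *\<^sub>R v) - (r * t) *\<^sub>R d) = \<bar>r\<bar> * N (pP v - t *\<^sub>R d)" by (simp add: N_scale)
  also have "\<dots> \<le> \<epsilon> * M (r *\<^sub>R v)"
    using mult_left_mono[OF d(2) abs_ge_zero[of r]] by (simp add: M_scale mult.left_commute)
  finally show ?thesis using d(1) by (auto simp: near_orbit_def)
qed

lemma near_orbit_mpow_g:
  assumes "near_orbit \<epsilon> v" "\<epsilon> \<ge> 0"
  shows "near_orbit \<epsilon> (mpow g n *v v)"
proof -
  obtain d t where d: "d \<in> orbit" "N (pP v - t *\<^sub>R d) \<le> \<epsilon> * M v" using assms by (auto simp: near_orbit_def)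
  have "mpow g m *v (pP v - t *\<^sub>R d) = \<mu> *\<^sub>R (pP v - t *\<^sub>R d)"
    using pP_in_P0[of v] orbit_props(1)[OF d(1)]
    by (simp add: matrix_vector_mult_diff_distrib matrix_vector_mult_scaleR algebra_simps)
  moreover have "pP (mpow g n *v v) - t *\<^sub>R (mpow g n *v d) = mpow g n *v (pP v - t *\<^sub>R d)"
    by (simp add: split_mpow_g matrix_vector_mult_diff_distrib matrix_vector_mult_scaleR)
  ultimately have "N (pP (mpow g n *v v) - t *\<^sub>R (mpow g n *v d)) = \<nu> ^ n * N (pP v - t *\<^sub>R d)"
    using N_mpow_g by simp
  also have "\<dots> \<le> \<epsilon> * M (mpow g n *v v)" using d(2) nu by (simp add: M_mpow_g mult_left_mono mult.left_commute)
  finally show ?thesis using orbit_props(5)[OF d(1)] by (auto simp: near_orbit_def)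
qed

definition cone_P :: "real \<Rightarrow> real \<Rightarrow> vec3 \<Rightarrow> bool" where
  "cone_P \<epsilon> \<delta> v \<longleftrightarrow> \<bar>xl v\<bar> \<le> \<delta> * M v \<and> near_orbit \<epsilon> v"

lemma scale_invariant_cone_P: "scale_invariant (cone_P \<epsilon> \<delta>)"
  unfolding scale_invariant_def cone_P_def
  by (auto simp: split_simps M_scale abs_mult mult.left_commute near_orbit_scale intro: mult_left_mono)

lemma eventually_mpow_g_into_cone_P:
  assumes "0 < \<kappa>" "0 < \<delta>" "0 \<le> \<epsilon>"
  shows "\<forall>\<^sub>F n in sequentially. \<forall>v. \<kappa> * norm v \<le> M v \<and> near_orbit \<epsilon> v \<longrightarrow>
    cone_P \<epsilon> \<delta> (mpow g n *v v) \<and> 2 * norm v \<le> norm (mpow g n *v v)"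
  using eventually_mpow_g_expands_P0_dominated[OF assms(1,2)]
  by (rule eventually_mono) (simp add: cone_P_def near_orbit_mpow_g assms(3))

definition K :: real where
  "K = (SOME K. 0 < K \<and> (\<forall>v. \<bar>xu v\<bar> \<le> K * norm v \<and> \<bar>xs v\<bar> \<le> K * norm v
     \<and> \<bar>xl v\<bar> \<le> K * norm v \<and> M v \<le> K * norm v))"

lemma K_bounds: "0 < K" "\<bar>xu v\<bar> \<le> K * norm v" "\<bar>xs v\<bar> \<le> K * norm v" "\<bar>xl v\<bar> \<le> K * norm v"
  "M v \<le> K * norm v"
proof -
  obtain K1 K2 where "K1 > 0" "\<And>v. \<bar>xu v\<bar> \<le> K1 * norm v \<and> \<bar>xs v\<bar> \<le> K1 * norm v"
    "K2 > 0" "\<And>v. \<bar>xl v\<bar> \<le> K2 * norm v \<and> M v \<le> K2 * norm v"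
    using coord_bound split_bound by metis
  then have "\<exists>K. 0 < K \<and> (\<forall>v. \<bar>xu v\<bar> \<le> K * norm v \<and> \<bar>xs v\<bar> \<le> K * norm v
     \<and> \<bar>xl v\<bar> \<le> K * norm v \<and> M v \<le> K * norm v)"
    by (intro exI[of _ "K1 + K2"]) (smt (verit) mult_right_mono norm_ge_zero)
  from someI_ex[OF this, folded K_def]
  show "0 < K" "\<bar>xu v\<bar> \<le> K * norm v" "\<bar>xs v\<bar> \<le> K * norm v" "\<bar>xl v\<bar> \<le> K * norm v"
    "M v \<le> K * norm v" by blast+
qed

lemma M_add: "M (v + w) \<le> M v + M w"
  by (simp add: M_def split_simps N_add)

lemma M_lower_bound: "\<bar>a\<bar> * M e - K * norm r \<le> M (a *\<^sub>R e + r)"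
proof -
  have "M (a *\<^sub>R e) \<le> M (a *\<^sub>R e + r) + M (- r)" using M_add[of "a *\<^sub>R e + r" "- r"] by simp
  then show ?thesis using M_scale[of "-1" r] K_bounds(5)[of r] by (simp add: M_scale)
qed

lemma eigvec_orbit: "pP eu \<in> orbit" "pP es \<in> orbit"
  unfolding orbit_def by (auto intro!: range_eqI[of _ _ 0] simp: matrix_vector_mul_lid)

lemma near_eigvec_bounds:
  assumes e: "pP e \<in> orbit" "e \<noteq> 0"
    and y: "linear y" "\<And>v. \<bar>y v\<bar> \<le> K * norm v" "\<bar>y e\<bar> = 1"
    and v: "v = a *\<^sub>R e + r" "norm r \<le> \<eta> * \<bar>a\<bar>"
    and \<eta>: "0 \<le> \<eta>" "\<eta> \<le> norm e" "K * \<eta> \<le> 1 / 2" "K * \<eta> \<le> \<bar>xl e\<bar> / 2" "K * \<eta> \<le> M e / 2"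
      "K * \<eta> \<le> \<epsilon> * M e / 2" "0 \<le> \<epsilon>"
  shows "1 / (4 * norm e) * norm v \<le> \<bar>y v\<bar>" "\<bar>xl e\<bar> / (4 * norm e) * norm v \<le> \<bar>xl v\<bar>"
    "M e / (4 * norm e) * norm v \<le> M v" "near_orbit \<epsilon> v"
proof -
  have K: "0 \<le> K" using K_bounds(1) by simp
  have ne: "norm e > 0" using e(2) by simp
  show "1 / (4 * norm e) * norm v \<le> \<bar>y v\<bar>"
    using linear_lower_bound_near_line[OF y(1,2) v order.refl _ \<eta>(2,1) K ne] \<eta>(3) y(3) by simp
  show "\<bar>xl e\<bar> / (4 * norm e) * norm v \<le> \<bar>xl v\<bar>"
    using linear_lower_bound_near_line[OF split_linear(1) K_bounds(4) v order.refl \<eta>(4,2,1) K ne] .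
  note M = lower_bound_near_line[OF v _ order.refl \<eta>(5,2,1) K ne, where F=M, OF M_lower_bound[of a e r, folded v(1)]]
  show "M e / (4 * norm e) * norm v \<le> M v" by (rule M(1))
  have "N (pP v - a *\<^sub>R pP e) = M r" by (simp add: v M_def split_simps)
  also have "\<dots> \<le> (K * \<eta>) * \<bar>a\<bar>" using K_bounds(5)[of r] mult_left_mono[OF v(2) K] by (simp add: mult.assoc)
  also have "\<dots> \<le> (\<epsilon> * M e / 2) * \<bar>a\<bar>" by (rule mult_right_mono[OF \<eta>(6) abs_ge_zero])
  also have "\<dots> \<le> \<epsilon> * M v" using mult_left_mono[OF M(2) \<eta>(7)] by (simp add: algebra_simps)
  finally show "near_orbit \<epsilon> v" using e(1) unfolding near_orbit_def by blast
qed

lemma eventually_near_eigvec_bounds: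
  assumes "0 < \<epsilon>" and e: "pP e \<in> orbit" "e \<noteq> 0" "xl e \<noteq> 0"
    and y: "linear y" "\<And>v. \<bar>y v\<bar> \<le> K * norm v" "\<bar>y e\<bar> = 1"
    and Q: "0 \<le> c" "\<And>\<delta> v. Q \<delta> v \<Longrightarrow> norm (v - y v *\<^sub>R e) \<le> (c * \<delta>) * \<bar>y v\<bar>"
  shows "\<forall>\<^sub>F \<kappa> in at_right 0. \<forall>\<^sub>F \<delta> in at_right 0. \<forall>v. Q \<delta> v \<longrightarrow>
    \<kappa> * norm v \<le> \<bar>y v\<bar> \<and> \<kappa> * norm v \<le> \<bar>xl v\<bar> \<and> \<kappa> * norm v \<le> M v \<and> near_orbit \<epsilon> v"
proof -
  have ne: "norm e > 0" using e(2) by simp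
  have Me: "M e > 0" using orbit_props(4)[OF e(1)] by (simp add: M_def)
  have "\<forall>\<^sub>F \<kappa> in at_right 0. \<kappa> < 1 / (4 * norm e) \<and> \<kappa> < \<bar>xl e\<bar> / (4 * norm e)
      \<and> \<kappa> < M e / (4 * norm e)"
    using ne e(3) Me by (intro eventually_conj eventually_at_right_0_less[where C=1, simplified]) auto
  moreover have "\<forall>\<^sub>F \<delta> in at_right 0. 0 < \<delta> \<and> c * \<delta> < norm e \<and> (K * c) * \<delta> < 1 / 2
      \<and> (K * c) * \<delta> < \<bar>xl e\<bar> / 2 \<and> (K * c) * \<delta> < M e / 2 \<and> (K * c) * \<delta> < \<epsilon> * M e / 2"
    using ne e(3) Me assms(1)
    by (intro eventually_conj eventually_at_right_less eventually_at_right_0_less) auto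
  ultimately show ?thesis
  proof (rule eventually_mono[OF _ eventually_mono], intro allI impI)
    fix \<kappa> \<delta> :: real and v
    assume \<kappa>: "\<kappa> < 1 / (4 * norm e) \<and> \<kappa> < \<bar>xl e\<bar> / (4 * norm e) \<and> \<kappa> < M e / (4 * norm e)"
      and \<delta>: "0 < \<delta> \<and> c * \<delta> < norm e \<and> (K * c) * \<delta> < 1 / 2 \<and> (K * c) * \<delta> < \<bar>xl e\<bar> / 2
        \<and> (K * c) * \<delta> < M e / 2 \<and> (K * c) * \<delta> < \<epsilon> * M e / 2"
      and v: "Q \<delta> v"
    have "v = y v *\<^sub>R e + (v - y v *\<^sub>R e)" by simp
    moreover have "0 \<le> c * \<delta>" "c * \<delta> \<le> norm e" "K * (c * \<delta>) \<le> 1 / 2"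
      "K * (c * \<delta>) \<le> \<bar>xl e\<bar> / 2" "K * (c * \<delta>) \<le> M e / 2" "K * (c * \<delta>) \<le> \<epsilon> * M e / 2"
      using \<delta> Q(1) by (auto simp: mult.assoc)
    ultimately have "1 / (4 * norm e) * norm v \<le> \<bar>y v\<bar>" "\<bar>xl e\<bar> / (4 * norm e) * norm v \<le> \<bar>xl v\<bar>"
      "M e / (4 * norm e) * norm v \<le> M v" "near_orbit \<epsilon> v"
      using near_eigvec_bounds[OF e(1,2) y _ Q(2)[OF v]] assms(1) by auto
    with \<kappa> show "\<kappa> * norm v \<le> \<bar>y v\<bar> \<and> \<kappa> * norm v \<le> \<bar>xl v\<bar> \<and> \<kappa> * norm v \<le> M v \<and> near_orbit \<epsilon> v"
      by (meson lower_bound_mono less_imp_le)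
  qed
qed

lemma eventually_cone_u_bounds:
  assumes "0 < \<epsilon>"
  shows "\<forall>\<^sub>F \<kappa> in at_right 0. \<forall>\<^sub>F \<delta> in at_right 0. \<forall>v. cone_u \<delta> v \<longrightarrow>
    \<kappa> * norm v \<le> \<bar>xu v\<bar> \<and> \<kappa> * norm v \<le> \<bar>xl v\<bar> \<and> \<kappa> * norm v \<le> M v \<and> near_orbit \<epsilon> v"
proof (rule eventually_near_eigvec_bounds[OF assms eigvec_orbit(1) eigvec_nonzero(1) xl_eu coord_linear(1)
      K_bounds(2)])
  show "norm (v - xu v *\<^sub>R eu) \<le> ((norm ec + norm es) * \<delta>) * \<bar>xu v\<bar>" if "cone_u \<delta> v" for \<delta> v
  proof -
    have "v - xu v *\<^sub>R eu = xc v *\<^sub>R ec + xs v *\<^sub>R es"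
      by (simp only: diff_eq_eq) (rule trans[OF coord_expansion[of v]], simp add: ac_simps)
    then show ?thesis using norm_cone_u_remainder[OF that] by simp
  qed
qed (simp_all add: coord_eigvec)

lemma eventually_cone_s_bounds:
  assumes "0 < \<epsilon>"
  shows "\<forall>\<^sub>F \<kappa> in at_right 0. \<forall>\<^sub>F \<delta> in at_right 0. \<forall>v. cone_s \<delta> v \<longrightarrow>
    \<kappa> * norm v \<le> \<bar>xs v\<bar> \<and> \<kappa> * norm v \<le> \<bar>xl v\<bar> \<and> \<kappa> * norm v \<le> M v \<and> near_orbit \<epsilon> v"
proof (rule eventually_near_eigvec_bounds[OF assms eigvec_orbit(2) eigvec_nonzero(3) xl_es coord_linear(3)
      K_bounds(3)])
  show "norm (v - xs v *\<^sub>R es) \<le> ((norm ec + norm eu) * \<delta>) * \<bar>xs v\<bar>" if "cone_s \<delta> v" for \<delta> v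
  proof -
    have "v - xs v *\<^sub>R es = xc v *\<^sub>R ec + xu v *\<^sub>R eu"
      by (simp only: diff_eq_eq) (rule trans[OF coord_expansion[of v]], simp add: ac_simps)
    then show ?thesis using norm_cone_s_remainder[OF that] by simp
  qed
qed (simp_all add: coord_eigvec)

lemma eventually_cone_L_bounds:
  "\<forall>\<^sub>F \<kappa> in at_right 0. \<forall>\<^sub>F \<delta> in at_right 0. \<forall>v. cone_L \<delta> v \<longrightarrow>
    \<kappa> * norm v \<le> \<bar>xu v\<bar> \<and> \<kappa> * norm v \<le> \<bar>xs v\<bar> \<and> \<kappa> * norm v \<le> \<bar>xl v\<bar>"
proof -
  have ne: "norm l0 > 0" using l0_nonzero by simp
  have "\<forall>\<^sub>F \<kappa> in at_right 0. \<kappa> < \<bar>xu l0\<bar> / (4 * norm l0) \<and> \<kappa> < \<bar>xs l0\<bar> / (4 * norm l0)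
      \<and> \<kappa> < 1 / (4 * norm l0)"
    using ne xu_l0 xs_l0 by (intro eventually_conj eventually_at_right_0_less[where C=1, simplified]) auto
  moreover have "\<forall>\<^sub>F \<delta> in at_right 0. 0 < \<delta> \<and> K * \<delta> < \<bar>xu l0\<bar> / 2 \<and> K * \<delta> < \<bar>xs l0\<bar> / 2
      \<and> K * \<delta> < 1 / 2 \<and> 1 * \<delta> < norm l0"
    using ne xu_l0 xs_l0 by (intro eventually_conj eventually_at_right_less eventually_at_right_0_less) auto
  ultimately show ?thesis
  proof (rule eventually_mono[OF _ eventually_mono], intro allI impI)
    fix \<kappa> \<delta> :: real and v
    assume \<kappa>: "\<kappa> < \<bar>xu l0\<bar> / (4 * norm l0) \<and> \<kappa> < \<bar>xs l0\<bar> / (4 * norm l0) \<and> \<kappa> < 1 / (4 * norm l0)"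
      and \<delta>: "0 < \<delta> \<and> K * \<delta> < \<bar>xu l0\<bar> / 2 \<and> K * \<delta> < \<bar>xs l0\<bar> / 2 \<and> K * \<delta> < 1 / 2 \<and> 1 * \<delta> < norm l0"
      and v: "cone_L \<delta> v"
    have split_v: "v = xl v *\<^sub>R l0 + pP v" using split[of v] by (simp add: add.commute)
    have r: "norm (pP v) \<le> \<delta> * \<bar>xl v\<bar>" using norm_pP_le_M[of v] v by (simp add: cone_L_def)
    note lb = linear_lower_bound_near_line[OF _ _ split_v r order.refl]
    have "\<bar>xu l0\<bar> / (4 * norm l0) * norm v \<le> \<bar>xu v\<bar>"
      by (rule lb[OF coord_linear(1) K_bounds(2)]) (use \<delta> ne K_bounds(1) in auto)
    moreover have "\<bar>xs l0\<bar> / (4 * norm l0) * norm v \<le> \<bar>xs v\<bar>"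
      by (rule lb[OF coord_linear(3) K_bounds(3)]) (use \<delta> ne K_bounds(1) in auto)
    moreover have "\<bar>xl l0\<bar> / (4 * norm l0) * norm v \<le> \<bar>xl v\<bar>"
      by (rule lb[OF split_linear(1) K_bounds(4)]) (use \<delta> ne K_bounds(1) in \<open>auto simp: split_l0\<close>)
    ultimately have "\<bar>xu l0\<bar> / (4 * norm l0) * norm v \<le> \<bar>xu v\<bar>" "\<bar>xs l0\<bar> / (4 * norm l0) * norm v \<le> \<bar>xs v\<bar>"
      "1 / (4 * norm l0) * norm v \<le> \<bar>xl v\<bar>" by (simp_all add: split_l0)
    with \<kappa> show "\<kappa> * norm v \<le> \<bar>xu v\<bar> \<and> \<kappa> * norm v \<le> \<bar>xs v\<bar> \<and> \<kappa> * norm v \<le> \<bar>xl v\<bar>"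
      by (meson lower_bound_mono less_imp_le)
  qed
qed

text \<open>On \<open>cone_P\<close> the vector is close to a multiple of an orbit point \<open>d\<close>, on which \<open>xu\<close> and
  \<open>xs\<close> are at least \<open>orbit_const\<close> relative to \<open>N\<close>.\<close>

lemma cone_P_bounds:
  assumes v: "cone_P \<epsilon> \<delta> v" and \<epsilon>: "0 < \<epsilon>" "\<epsilon> \<le> 1 / 4" "8 * K * \<epsilon> \<le> orbit_const"
    and \<delta>: "0 \<le> \<delta>" "norm l0 * \<delta> \<le> \<epsilon>"
  shows "orbit_const / 4 * norm v \<le> \<bar>xu v\<bar>" "orbit_const / 4 * norm v \<le> \<bar>xs v\<bar>" "1 / 2 * norm v \<le> M v"
proof -
  obtain d t where d: "d \<in> orbit" "N (pP v - t *\<^sub>R d) \<le> \<epsilon> * M v" using v by (auto simp: cone_P_def near_orbit_def)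
  note Nd = orbit_props(2-4)[OF d(1)]
  have "\<bar>xl v\<bar> * norm l0 \<le> (\<delta> * M v) * norm l0" using v by (intro mult_right_mono) (auto simp: cone_P_def)
  also have "\<dots> = (norm l0 * \<delta>) * M v" by simp
  also have "\<dots> \<le> \<epsilon> * M v" by (rule mult_right_mono[OF \<delta>(2) M_nonneg])
  finally have xl: "\<bar>xl v\<bar> * norm l0 \<le> \<epsilon> * M v" .
  define r where "r = (pP v - t *\<^sub>R d) + xl v *\<^sub>R l0"
  have split_v: "v = t *\<^sub>R d + r" using split[of v] by (simp add: r_def algebra_simps)
  have "norm r \<le> N (pP v - t *\<^sub>R d) + \<bar>xl v\<bar> * norm l0"
    using norm_triangle_ineq[of "pP v - t *\<^sub>R d" "xl v *\<^sub>R l0"] norm_le_N[of "pP v - t *\<^sub>R d"]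
    by (simp add: r_def)
  then have nr: "norm r \<le> 2 * \<epsilon> * M v" using d(2) xl by simp
  have "M v \<le> \<bar>t\<bar> * N d + \<epsilon> * M v"
    using N_add[of "t *\<^sub>R d" "pP v - t *\<^sub>R d"] d(2) by (simp add: M_def N_scale)
  moreover have "\<epsilon> * M v \<le> M v / 4" using mult_right_mono[OF \<epsilon>(2) M_nonneg[of v]] by simp
  moreover have "0 \<le> \<bar>t\<bar> * N d" using Nd(3) by simp
  ultimately have Mv: "M v \<le> 2 * (\<bar>t\<bar> * N d)" by linarith
  have "2 * \<epsilon> * M v \<le> 2 * \<epsilon> * (2 * (\<bar>t\<bar> * N d))" using Mv \<epsilon>(1) by (intro mult_left_mono) auto
  then have "norm r \<le> (4 * \<epsilon> * N d) * \<bar>t\<bar>" using nr by (simp add: mult.commute mult.left_commute)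
  note lb = linear_lower_bound_near_line[OF _ _ split_v this norm_le_N]
  have "K * (4 * \<epsilon> * N d) \<le> orbit_const * N d / 2"
    using mult_right_mono[OF \<epsilon>(3) less_imp_le[OF Nd(3)]] by (simp add: algebra_simps)
  then have K\<epsilon>: "K * (4 * \<epsilon> * N d) \<le> \<bar>xu d\<bar> / 2" "K * (4 * \<epsilon> * N d) \<le> \<bar>xs d\<bar> / 2"
    using Nd(1,2) by linarith+
  have "\<bar>xu d\<bar> / (4 * N d) * norm v \<le> \<bar>xu v\<bar>"
    by (rule lb[OF coord_linear(1) K_bounds(2)]) (use K\<epsilon> Nd(3) \<epsilon>(1,2) K_bounds(1) in auto)
  moreover have "\<bar>xs d\<bar> / (4 * N d) * norm v \<le> \<bar>xs v\<bar>"
    by (rule lb[OF coord_linear(3) K_bounds(3)]) (use K\<epsilon> Nd(3) \<epsilon>(1,2) K_bounds(1) in auto)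
  moreover have "orbit_const / 4 \<le> \<bar>xu d\<bar> / (4 * N d)" "orbit_const / 4 \<le> \<bar>xs d\<bar> / (4 * N d)"
    using Nd by (simp_all add: field_simps)
  ultimately show "orbit_const / 4 * norm v \<le> \<bar>xu v\<bar>" "orbit_const / 4 * norm v \<le> \<bar>xs v\<bar>"
    by (meson lower_bound_mono)+
  have "norm v \<le> norm (pP v) + \<bar>xl v\<bar> * norm l0"
    using split[of v] norm_triangle_ineq[of "pP v" "xl v *\<^sub>R l0"] by simp
  also have "\<dots> \<le> M v + M v / 4" using norm_pP_le_M[of v] xl \<open>\<epsilon> * M v \<le> M v / 4\<close> by linarith
  finally show "1 / 2 * norm v \<le> M v" using M_nonneg[of v] by linarith
qed

lemma eventually_cone_P_bounds:
  "\<forall>\<^sub>F \<epsilon> in at_right 0. \<forall>\<^sub>F \<kappa> in at_right 0. \<forall>\<^sub>F \<delta> in at_right 0. \<forall>v. cone_P \<epsilon> \<delta> v \<longrightarrow>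
    \<kappa> * norm v \<le> \<bar>xu v\<bar> \<and> \<kappa> * norm v \<le> \<bar>xs v\<bar> \<and> \<kappa> * norm v \<le> M v"
proof -
  have "\<forall>\<^sub>F \<epsilon> in at_right 0. 0 < \<epsilon> \<and> 1 * \<epsilon> < 1 / 4 \<and> (8 * K) * \<epsilon> < orbit_const"
    using orbit_const_pos by (intro eventually_conj eventually_at_right_less eventually_at_right_0_less) auto
  moreover have "\<forall>\<^sub>F \<kappa> in at_right 0. 1 * \<kappa> < orbit_const / 4 \<and> 1 * \<kappa> < 1 / 2"
    using orbit_const_pos by (intro eventually_conj eventually_at_right_0_less) auto
  ultimately show ?thesis
  proof (rule eventually_mono[OF _ eventually_mono])
    fix \<epsilon> \<kappa> :: real
    assume \<epsilon>: "0 < \<epsilon> \<and> 1 * \<epsilon> < 1 / 4 \<and> (8 * K) * \<epsilon> < orbit_const"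
      and \<kappa>: "1 * \<kappa> < orbit_const / 4 \<and> 1 * \<kappa> < 1 / 2"
    have "\<forall>\<^sub>F \<delta> in at_right 0. 0 < \<delta> \<and> norm l0 * \<delta> < \<epsilon>"
      using \<epsilon> by (intro eventually_conj eventually_at_right_less eventually_at_right_0_less) auto
    then show "\<forall>\<^sub>F \<delta> in at_right 0. \<forall>v. cone_P \<epsilon> \<delta> v \<longrightarrow>
        \<kappa> * norm v \<le> \<bar>xu v\<bar> \<and> \<kappa> * norm v \<le> \<bar>xs v\<bar> \<and> \<kappa> * norm v \<le> M v"
    proof (rule eventually_mono, intro allI impI)
      fix \<delta> v assume \<delta>: "0 < \<delta> \<and> norm l0 * \<delta> < \<epsilon>" and v: "cone_P \<epsilon> \<delta> v"
      have "orbit_const / 4 * norm v \<le> \<bar>xu v\<bar>" "orbit_const / 4 * norm v \<le> \<bar>xs v\<bar>" "1 / 2 * norm v \<le> M v"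
        using cone_P_bounds[OF v] \<epsilon> \<delta> by auto
      with \<kappa> show "\<kappa> * norm v \<le> \<bar>xu v\<bar> \<and> \<kappa> * norm v \<le> \<bar>xs v\<bar> \<and> \<kappa> * norm v \<le> M v"
        by (simp only: mult_1) (meson lower_bound_mono less_imp_le)
    qed
  qed
qed

lemma eventually_cone_P_cone_L_disjoint:
  "\<forall>\<^sub>F \<delta> in at_right 0. \<forall>v. cone_P \<epsilon> \<delta> v \<and> cone_L \<delta> v \<longrightarrow> v = 0"
proof -
  have "\<forall>\<^sub>F \<delta> in at_right (0::real). 0 < \<delta> \<and> 1 * \<delta> < 1"
    by (intro eventually_conj eventually_at_right_less eventually_at_right_0_less) simp
  then show ?thesis
  proof (rule eventually_mono, intro allI impI)
    fix \<delta> :: real and v assume \<delta>: "0 < \<delta> \<and> 1 * \<delta> < 1" and v: "cone_P \<epsilon> \<delta> v \<and> cone_L \<delta> v"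
    then have "\<bar>xl v\<bar> \<le> \<delta> * (\<delta> * \<bar>xl v\<bar>)"
      by (auto simp: cone_P_def cone_L_def intro: order_trans mult_left_mono)
    moreover have "\<delta> * (\<delta> * \<bar>xl v\<bar>) \<le> \<delta> * \<bar>xl v\<bar>" "\<delta> * \<bar>xl v\<bar> \<le> \<bar>xl v\<bar>"
      using \<delta> by (auto intro!: mult_left_mono mult_left_le_one_le)
    ultimately have "xl v = 0"
      using \<delta> by (smt (verit) mult_less_cancel_right2 zero_less_abs_iff)
    then have "M v \<le> 0" using v by (simp add: cone_L_def)
    then have "pP v = 0" using norm_pP_le_M[of v] by (metis norm_le_zero_iff order_trans)
    with \<open>xl v = 0\<close> show "v = 0" using split[of v] by simp
  qed
qed

text \<open>The coefficient of \<open>l0\<close> is chosen so that \<open>xu\<close>, \<open>xs\<close> and \<open>xl\<close> do not vanish.\<close>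

definition base_point :: vec3 where
  "base_point = eu + (1 + 1 / \<bar>xu l0\<bar> + \<bar>xl eu\<bar>) *\<^sub>R l0"

lemma base_point: "xu base_point \<noteq> 0" "xs base_point \<noteq> 0" "xl base_point \<noteq> 0"
  "pP base_point = pP eu" "base_point \<noteq> 0"
proof -
  define t where "t = 1 + 1 / \<bar>xu l0\<bar> + \<bar>xl eu\<bar>"
  have a: "\<bar>xu l0\<bar> > 0" using xu_l0 by simp
  then have "1 / \<bar>xu l0\<bar> > 0" by simp
  then have t: "t > 0" "t > \<bar>xl eu\<bar>" unfolding t_def by linarith+
  have "t * \<bar>xu l0\<bar> = \<bar>xu l0\<bar> + 1 + \<bar>xl eu\<bar> * \<bar>xu l0\<bar>" unfolding t_def using a by (simp add: field_simps)
  moreover have "\<bar>xl eu\<bar> * \<bar>xu l0\<bar> \<ge> 0" by simp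
  ultimately have "\<bar>t * xu l0\<bar> > 1" using a t(1) by (simp only: abs_mult abs_of_pos)
  moreover have "xu base_point = 1 + t * xu l0" by (simp add: base_point_def t_def coord_simps coord_eigvec)
  ultimately show "xu base_point \<noteq> 0" by linarith
  show "xs base_point \<noteq> 0" using t(1) xs_l0 by (simp add: base_point_def t_def[symmetric] coord_simps coord_eigvec)
  show "xl base_point \<noteq> 0" using t(2) by (simp add: base_point_def t_def[symmetric] split_simps split_l0)
  show "pP base_point = pP eu" by (simp add: base_point_def split_simps split_l0)
  then show "base_point \<noteq> 0" using \<open>xs base_point \<noteq> 0\<close> by (auto simp: coord_simps)
qed

lemma near_orbit_base_point: "0 \<le> \<epsilon> \<Longrightarrow> near_orbit \<epsilon> base_point"
  unfolding near_orbit_def using eigvec_orbit(1) M_nonneg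
  by (intro bexI[of _ "pP eu"] exI[of _ 1]) (simp_all add: base_point N_scale[of 0, simplified])

lemma eventually_base_point_bounds:
  "\<forall>\<^sub>F \<kappa> in at_right 0. \<kappa> * norm base_point \<le> \<bar>xu base_point\<bar> \<and> \<kappa> * norm base_point \<le> \<bar>xs base_point\<bar>
    \<and> \<kappa> * norm base_point \<le> \<bar>xl base_point\<bar> \<and> \<kappa> * norm base_point \<le> M base_point"
proof -
  have "M base_point > 0" using orbit_props(4)[OF eigvec_orbit(1)] by (simp add: M_def base_point)
  then have "\<forall>\<^sub>F \<kappa> in at_right 0. norm base_point * \<kappa> < \<bar>xu base_point\<bar> \<and> norm base_point * \<kappa> < \<bar>xs base_point\<bar>
    \<and> norm base_point * \<kappa> < \<bar>xl base_point\<bar> \<and> norm base_point * \<kappa> < M base_point"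
    using base_point by (intro eventually_conj eventually_at_right_0_less) auto
  then show ?thesis by (rule eventually_mono) (simp add: mult.commute)
qed

lemma eventually_base_point_outside_cones:
  "\<forall>\<^sub>F \<delta> in at_right 0. \<not> cone_u \<delta> base_point \<and> \<not> cone_s \<delta> base_point \<and> \<not> cone_P \<epsilon> \<delta> base_point
    \<and> \<not> cone_L \<delta> base_point"
proof -
  have "M base_point > 0" using orbit_props(4)[OF eigvec_orbit(1)] by (simp add: M_def base_point)
  then have "\<forall>\<^sub>F \<delta> in at_right 0. \<bar>xu base_point\<bar> * \<delta> < \<bar>xs base_point\<bar> \<and> \<bar>xs base_point\<bar> * \<delta> < \<bar>xu base_point\<bar>
    \<and> M base_point * \<delta> < \<bar>xl base_point\<bar> \<and> \<bar>xl base_point\<bar> * \<delta> < M base_point"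
    using base_point by (intro eventually_conj eventually_at_right_0_less) auto
  then show ?thesis
    by (rule eventually_mono)
      (auto simp: cone_u_def cone_s_def cone_P_def cone_L_def mult.commute intro: add_increasing)
qed

definition good_cones :: "real \<Rightarrow> real \<Rightarrow> real \<Rightarrow> bool" where
  "good_cones \<epsilon> \<kappa> \<delta> \<longleftrightarrow> 0 < \<epsilon> \<and> 0 < \<kappa> \<and> 0 < \<delta> \<and>
    (\<forall>v. cone_u \<delta> v \<longrightarrow> \<kappa> * norm v \<le> \<bar>xu v\<bar> \<and> \<kappa> * norm v \<le> \<bar>xl v\<bar> \<and> \<kappa> * norm v \<le> M v
      \<and> near_orbit \<epsilon> v) \<and>
    (\<forall>v. cone_s \<delta> v \<longrightarrow> \<kappa> * norm v \<le> \<bar>xs v\<bar> \<and> \<kappa> * norm v \<le> \<bar>xl v\<bar> \<and> \<kappa> * norm v \<le> M v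
      \<and> near_orbit \<epsilon> v) \<and>
    (\<forall>v. cone_P \<epsilon> \<delta> v \<longrightarrow> \<kappa> * norm v \<le> \<bar>xu v\<bar> \<and> \<kappa> * norm v \<le> \<bar>xs v\<bar> \<and> \<kappa> * norm v \<le> M v) \<and>
    (\<forall>v. cone_L \<delta> v \<longrightarrow> \<kappa> * norm v \<le> \<bar>xu v\<bar> \<and> \<kappa> * norm v \<le> \<bar>xs v\<bar> \<and> \<kappa> * norm v \<le> \<bar>xl v\<bar>) \<and>
    (\<forall>v. cone_u \<delta> v \<and> cone_s \<delta> v \<longrightarrow> v = 0) \<and> (\<forall>v. cone_P \<epsilon> \<delta> v \<and> cone_L \<delta> v \<longrightarrow> v = 0) \<and>
    (\<forall>v. cone_u \<delta> v \<and> \<kappa> * norm v \<le> \<bar>xs v\<bar> \<longrightarrow> v = 0) \<and>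
    (\<forall>v. cone_s \<delta> v \<and> \<kappa> * norm v \<le> \<bar>xu v\<bar> \<longrightarrow> v = 0) \<and>
    \<kappa> * norm base_point \<le> \<bar>xu base_point\<bar> \<and> \<kappa> * norm base_point \<le> \<bar>xs base_point\<bar> \<and>
    \<kappa> * norm base_point \<le> \<bar>xl base_point\<bar> \<and> \<kappa> * norm base_point \<le> M base_point \<and>
    \<not> cone_u \<delta> base_point \<and> \<not> cone_s \<delta> base_point \<and> \<not> cone_P \<epsilon> \<delta> base_point \<and> \<not> cone_L \<delta> base_point"

text \<open>First \<open>\<epsilon>\<close>, then \<open>\<kappa>\<close>, then \<open>\<delta>\<close> is taken small enough.\<close>

lemma good_cones_exist: "\<exists>\<epsilon> \<kappa> \<delta>. good_cones \<epsilon> \<kappa> \<delta>"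
proof -
  obtain \<epsilon> where \<epsilon>: "\<epsilon> > 0" and P: "\<forall>\<^sub>F \<kappa> in at_right 0. \<forall>\<^sub>F \<delta> in at_right 0. \<forall>v. cone_P \<epsilon> \<delta> v \<longrightarrow>
      \<kappa> * norm v \<le> \<bar>xu v\<bar> \<and> \<kappa> * norm v \<le> \<bar>xs v\<bar> \<and> \<kappa> * norm v \<le> M v"
    using eventually_at_right_0_exists_pos[OF eventually_cone_P_bounds] by blast
  have "\<forall>\<^sub>F \<kappa> in at_right 0. \<forall>\<^sub>F \<delta> in at_right 0. good_cones \<epsilon> \<kappa> \<delta>"
    using eventually_at_right_less[of 0] eventually_cone_u_bounds[OF \<epsilon>] eventually_cone_s_bounds[OF \<epsilon>] P
      eventually_cone_L_bounds eventually_base_point_bounds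
  proof eventually_elim
    case (elim \<kappa>)
    note \<kappa> = this
    show ?case
      using eventually_at_right_less[of 0] eventually_cone_u_cone_s_disjoint
        eventually_cone_P_cone_L_disjoint[of \<epsilon>] eventually_cone_u_cone_s_small_coord[OF \<kappa>(1)]
        eventually_base_point_outside_cones[of \<epsilon>] \<kappa>(2-5)
    proof eventually_elim
      case (elim \<delta>)
      then show ?case using \<epsilon> \<kappa>(1,6) by (simp add: good_cones_def)
    qed
  qed
  then obtain \<kappa> where "\<forall>\<^sub>F \<delta> in at_right 0. good_cones \<epsilon> \<kappa> \<delta>"
    using eventually_at_right_0_exists_pos by blast
  then show ?thesis using eventually_at_right_0_exists_pos by blast
qed

lemma cond_star_if_good_cones:
  assumes "good_cones \<epsilon> \<kappa> \<delta>"
    and map_f: "\<And>v. \<kappa> * norm v \<le> \<bar>xu v\<bar> \<Longrightarrow>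
      cone_u \<delta> (mpow f n *v v) \<and> 2 * norm v \<le> norm (mpow f n *v v)"
    and map_inv_f: "\<And>v. \<kappa> * norm v \<le> \<bar>xs v\<bar> \<Longrightarrow>
      cone_s \<delta> (matrix_inv (mpow f n) *v v) \<and> 2 * norm v \<le> norm (matrix_inv (mpow f n) *v v)"
    and map_g: "\<And>v. \<kappa> * norm v \<le> M v \<and> near_orbit \<epsilon> v \<Longrightarrow>
      cone_P \<epsilon> \<delta> (mpow g n *v v) \<and> 2 * norm v \<le> norm (mpow g n *v v)"
    and map_inv_g: "\<And>v. \<kappa> * norm v \<le> \<bar>xl v\<bar> \<Longrightarrow>
      cone_L \<delta> (matrix_inv (mpow g n) *v v) \<and> 2 * norm v \<le> norm (matrix_inv (mpow g n) *v v)"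
  shows "cond_star {mpow f n, matrix_inv (mpow f n), mpow g n, matrix_inv (mpow g n)}"
proof -
  note gc = assms(1)[unfolded good_cones_def]
  have U: "\<kappa> * norm v \<le> \<bar>xu v\<bar> \<and> \<kappa> * norm v \<le> \<bar>xl v\<bar> \<and> \<kappa> * norm v \<le> M v \<and> near_orbit \<epsilon> v"
    if "cone_u \<delta> v" for v using gc that by blast
  have S: "\<kappa> * norm v \<le> \<bar>xs v\<bar> \<and> \<kappa> * norm v \<le> \<bar>xl v\<bar> \<and> \<kappa> * norm v \<le> M v \<and> near_orbit \<epsilon> v"
    if "cone_s \<delta> v" for v using gc that by blast
  have P: "\<kappa> * norm v \<le> \<bar>xu v\<bar> \<and> \<kappa> * norm v \<le> \<bar>xs v\<bar> \<and> \<kappa> * norm v \<le> M v \<and> near_orbit \<epsilon> v"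
    if "cone_P \<epsilon> \<delta> v" for v using gc that by (auto simp: cone_P_def)
  have L: "\<kappa> * norm v \<le> \<bar>xu v\<bar> \<and> \<kappa> * norm v \<le> \<bar>xs v\<bar> \<and> \<kappa> * norm v \<le> \<bar>xl v\<bar>"
    if "cone_L \<delta> v" for v using gc that by blast
  have cross: "\<And>v. cone_u \<delta> v \<Longrightarrow> \<kappa> * norm v \<le> \<bar>xs v\<bar> \<Longrightarrow> v = 0"
    "\<And>v. cone_s \<delta> v \<Longrightarrow> \<kappa> * norm v \<le> \<bar>xu v\<bar> \<Longrightarrow> v = 0" using gc by blast+
  show ?thesis
  proof (rule cond_star_pingpong[where Qa="cone_u \<delta>" and Qai="cone_s \<delta>" and Qb="cone_P \<epsilon> \<delta>"
        and Qbi="cone_L \<delta>" and w=base_point and c=2])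
    show "invertible (mpow f n)" "invertible (mpow g n)"
      using invertible_mpow_SL3 f_SL g_SL by blast+
    show "scale_invariant (cone_u \<delta>)" "scale_invariant (cone_s \<delta>)" "scale_invariant (cone_P \<epsilon> \<delta>)"
      "scale_invariant (cone_L \<delta>)"
      by (rule scale_invariant_cone_u scale_invariant_cone_s scale_invariant_cone_P scale_invariant_cone_L)+
    show "\<And>v. cone_u \<delta> v \<Longrightarrow> cone_s \<delta> v \<Longrightarrow> v = 0" "\<And>v. cone_P \<epsilon> \<delta> v \<Longrightarrow> cone_L \<delta> v \<Longrightarrow> v = 0"
      using gc by blast+
    show "\<And>v. cone_u \<delta> v \<Longrightarrow> cone_P \<epsilon> \<delta> v \<Longrightarrow> v = 0" "\<And>v. cone_u \<delta> v \<Longrightarrow> cone_L \<delta> v \<Longrightarrow> v = 0"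
      "\<And>v. cone_s \<delta> v \<Longrightarrow> cone_P \<epsilon> \<delta> v \<Longrightarrow> v = 0" "\<And>v. cone_s \<delta> v \<Longrightarrow> cone_L \<delta> v \<Longrightarrow> v = 0"
      using cross P L by blast+
    show "base_point \<noteq> 0" using base_point by blast
    show "\<not> cone_u \<delta> base_point" "\<not> cone_s \<delta> base_point" "\<not> cone_P \<epsilon> \<delta> base_point"
      "\<not> cone_L \<delta> base_point" using gc by blast+
    show "cone_u \<delta> (mpow f n *v base_point)" "cone_s \<delta> (matrix_inv (mpow f n) *v base_point)"
      "cone_P \<epsilon> \<delta> (mpow g n *v base_point)" "cone_L \<delta> (matrix_inv (mpow g n) *v base_point)"
      using gc map_f map_inv_f map_g map_inv_g near_orbit_base_point by auto
    show "cone_u \<delta> (mpow f n *v v) \<and> 2 * norm v \<le> norm (mpow f n *v v)"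
      if "cone_u \<delta> v \<or> cone_P \<epsilon> \<delta> v \<or> cone_L \<delta> v" for v using that U P L map_f by blast
    show "cone_s \<delta> (matrix_inv (mpow f n) *v v) \<and> 2 * norm v \<le> norm (matrix_inv (mpow f n) *v v)"
      if "cone_s \<delta> v \<or> cone_P \<epsilon> \<delta> v \<or> cone_L \<delta> v" for v using that S P L map_inv_f by blast
    show "cone_P \<epsilon> \<delta> (mpow g n *v v) \<and> 2 * norm v \<le> norm (mpow g n *v v)"
      if "cone_P \<epsilon> \<delta> v \<or> cone_u \<delta> v \<or> cone_s \<delta> v" for v using that P U S map_g by blast
    show "cone_L \<delta> (matrix_inv (mpow g n) *v v) \<and> 2 * norm v \<le> norm (matrix_inv (mpow g n) *v v)"
      if "cone_L \<delta> v \<or> cone_u \<delta> v \<or> cone_s \<delta> v" for v using that L U S map_inv_g by blast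
  qed simp
qed

lemma eventually_cond_star_if_good_cones:
  assumes "good_cones \<epsilon> \<kappa> \<delta>"
  shows "\<forall>\<^sub>F n in sequentially.
    cond_star {mpow f n, matrix_inv (mpow f n), mpow g n, matrix_inv (mpow g n)}"
proof -
  have pos: "0 < \<kappa>" "0 < \<delta>" "0 \<le> \<epsilon>" using assms by (simp_all add: good_cones_def)
  show ?thesis
    using eventually_mpow_f_into_cone_u[OF pos(1,2)] eventually_inv_mpow_f_into_cone_s[OF pos(1,2)]
      eventually_mpow_g_into_cone_P[OF pos] eventually_inv_mpow_g_into_cone_L[OF pos(1,2)]
  proof eventually_elim
    case (elim n)
    then show ?case by (intro cond_star_if_good_cones[OF assms]) blast+
  qed
qed

lemma cond_star_for_large_n:
  "\<exists>n0. \<forall>n>n0. cond_star {mpow f n, matrix_inv (mpow f n), mpow g n, matrix_inv (mpow g n)}"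
proof -
  obtain \<epsilon> \<kappa> \<delta> where "good_cones \<epsilon> \<kappa> \<delta>" using good_cones_exist by blast
  then obtain n0 where "\<forall>n\<ge>n0. cond_star {mpow f n, matrix_inv (mpow f n), mpow g n, matrix_inv (mpow g n)}"
    using eventually_cond_star_if_good_cones unfolding eventually_sequentially by blast
  then show ?thesis by (auto intro!: exI[of _ n0])
qed

end

theorem mainTheorem12:
  fixes f g :: mat3 and au ac as :: real and m :: nat and \<mu> :: real
  assumes f_SL: "f \<in> SL3" and g_SL: "g \<in> SL3"
    and Eu: "dim (eigsp f au) = 1" and Ec: "dim (eigsp f ac) = 1" and Es: "dim (eigsp f as) = 1"
    and moduli: "\<bar>au\<bar> > \<bar>ac\<bar>" "\<bar>ac\<bar> > \<bar>as\<bar>"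
    and m_pos: "m > 0" and mu: "\<mu> > 1"
    and P0: "dim (eigsp (mpow g m) \<mu>) = 2"
    and L0: "dim (eigsp (mpow g m) (\<mu> powr (-2))) = 1"
    and cond3: "\<not> eigsp f au \<subseteq> eigsp (mpow g m) \<mu>"
               "\<not> eigsp f ac \<subseteq> eigsp (mpow g m) \<mu>"
               "\<not> eigsp f as \<subseteq> eigsp (mpow g m) \<mu>"
               "\<not> eigsp (mpow g m) (\<mu> powr (-2)) \<subseteq> dsum (eigsp f au) (eigsp f ac)"
               "\<not> eigsp (mpow g m) (\<mu> powr (-2)) \<subseteq> dsum (eigsp f as) (eigsp f ac)"
    and cond4: "\<forall>k<m. \<not> act (mpow g k)
                   (dsum (eigsp f au) (eigsp (mpow g m) (\<mu> powr (-2))) \<inter> eigsp (mpow g m) \<mu>)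
                 \<subseteq> dsum (eigsp f as) (eigsp f ac) \<union> dsum (eigsp f au) (eigsp f ac)"
               "\<forall>k<m. \<not> act (mpow g k)
                   (dsum (eigsp f as) (eigsp (mpow g m) (\<mu> powr (-2))) \<inter> eigsp (mpow g m) \<mu>)
                 \<subseteq> dsum (eigsp f as) (eigsp f ac) \<union> dsum (eigsp f au) (eigsp f ac)"
  shows "\<exists>n0. \<forall>n>n0. cond_star {mpow f n, matrix_inv (mpow f n), mpow g n, matrix_inv (mpow g n)}"
proof -
  obtain eu ec es xu xc xs where F: "f_eigencoords f au ac as eu ec es xu xc xs"
    using f_eigencoords_exists[OF f_SL Eu Ec Es moduli] by blast
  obtain l0 xl pP where G: "gm_splitting g m \<mu> l0 xl pP"
    using gm_splitting_exists[OF g_SL m_pos mu P0 L0] by blast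
  interpret f_gm_data f au ac as eu ec es xu xc xs g m \<mu> l0 xl pP
    using F G by (rule f_gm_data.intro)
  have "pingpong_setting f au ac as eu ec es xu xc xs g m \<mu> l0 xl pP"
  proof (intro pingpong_setting.intro pingpong_setting_axioms.intro)
    show "f_gm_data f au ac as eu ec es xu xc xs g m \<mu> l0 xl pP" by unfold_locales
    show "xl eu \<noteq> 0" "xl es \<noteq> 0"
      using xl_ne_0_if_not_in_P0 cond3(1,3) eigsp by simp_all
    show "xu l0 \<noteq> 0" "xs l0 \<noteq> 0" using xu_l0_ne_0 xs_l0_ne_0 cond3(5,4) by simp_all
    show "xu (mpow g k *v pP eu) \<noteq> 0 \<and> xs (mpow g k *v pP eu) \<noteq> 0"
      "xu (mpow g k *v pP es) \<noteq> 0 \<and> xs (mpow g k *v pP es) \<noteq> 0" if "k < m" for k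
      using orbit_coords_ne_0 cond4 that eigsp by simp_all
  qed
  then show ?thesis by (rule pingpong_setting.cond_star_for_large_n)
qed

end
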